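(* Let $G$ be a $(P_3+P_1)$-free graph on $n$ vertices and let $\ell \ge \chi(G)+1$ be an integer. Then $\mathcal{R}_\ell(G)$ is connected and has diameter at most $6n$.
   Context: All graphs are finite and simple. A $k$-colouring of $G$ is a map $\alpha: V(G)\to\{1,\dots,k\}$ with $\alpha(u)\neq\alpha(v)$ for every edge $uv$; $\chi(G)$ is the chromatic number. The reconfiguration graph $\mathcal{R}_k(G)$ has the $k$-colourings of $G$ as vertices, two being adjacent if they differ on exactly one vertex. $G$ is $H$-free if it has no induced subgraph isomorphic to $H$; $P_3+P_1$ is the disjoint union of a path on 3 vertices and a single vertex. *)

theory Defs
  imports Main
begin

definition simple_graph :: "'a set \<Rightarrow> ('a \<Rightarrow> 'a \<Rightarrow> bool) \<Rightarrow> bool" where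
  "simple_graph V E \<longleftrightarrow> finite V \<and> (\<forall>u v. E u v \<longrightarrow> u \<in> V \<and> v \<in> V)
     \<and> (\<forall>u v. E u v \<longrightarrow> E v u) \<and> (\<forall>v. \<not> E v v)"

(* k-colourings: maps V \<rightarrow> {1..k}, proper, and (to make them unique objects)
   equal to undefined outside V *)
definition colouring :: "'a set \<Rightarrow> ('a \<Rightarrow> 'a \<Rightarrow> bool) \<Rightarrow> nat \<Rightarrow> ('a \<Rightarrow> nat) \<Rightarrow> bool" where
  "colouring V E k \<alpha> \<longleftrightarrow> (\<forall>v\<in>V. \<alpha> v \<in> {1..k}) \<and> (\<forall>v. v \<notin> V \<longrightarrow> \<alpha> v = undefined)
     \<and> (\<forall>u v. E u v \<longrightarrow> \<alpha> u \<noteq> \<alpha> v)"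

definition chromatic_number :: "'a set \<Rightarrow> ('a \<Rightarrow> 'a \<Rightarrow> bool) \<Rightarrow> nat" where
  "chromatic_number V E = (LEAST k. \<exists>\<alpha>. colouring V E k \<alpha>)"

definition recol_adj :: "'a set \<Rightarrow> ('a \<Rightarrow> 'a \<Rightarrow> bool) \<Rightarrow> nat \<Rightarrow> ('a \<Rightarrow> nat) \<Rightarrow> ('a \<Rightarrow> nat) \<Rightarrow> bool" where
  "recol_adj V E k \<alpha> \<beta> \<longleftrightarrow> colouring V E k \<alpha> \<and> colouring V E k \<beta>
     \<and> card {v\<in>V. \<alpha> v \<noteq> \<beta> v} = 1"

definition recol_walk :: "'a set \<Rightarrow> ('a \<Rightarrow> 'a \<Rightarrow> bool) \<Rightarrow> nat \<Rightarrow> nat \<Rightarrow> ('a \<Rightarrow> nat) \<Rightarrow> ('a \<Rightarrow> nat) \<Rightarrow> bool" where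
  "recol_walk V E k m \<alpha> \<beta> \<longleftrightarrow> (\<exists>p :: nat \<Rightarrow> ('a \<Rightarrow> nat).
      p 0 = \<alpha> \<and> p m = \<beta> \<and> (\<forall>i\<in>{0..m}. colouring V E k (p i))
      \<and> (\<forall>i<m. recol_adj V E k (p i) (p (Suc i))))"

definition recol_dist_le :: "'a set \<Rightarrow> ('a \<Rightarrow> 'a \<Rightarrow> bool) \<Rightarrow> nat \<Rightarrow> ('a \<Rightarrow> nat) \<Rightarrow> ('a \<Rightarrow> nat) \<Rightarrow> nat \<Rightarrow> bool" where
  "recol_dist_le V E k \<alpha> \<beta> d \<longleftrightarrow> (\<exists>m\<le>d. recol_walk V E k m \<alpha> \<beta>)"

(* P_3 + P_1 on vertex set {0,1,2,3}: path 0-1-2 and isolated vertex 3 *)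
definition P3P1_edge :: "nat \<Rightarrow> nat \<Rightarrow> bool" where
  "P3P1_edge i j \<longleftrightarrow> {i, j} = {0, 1} \<or> {i, j} = {1, 2}"

definition has_induced_P3P1 :: "'a set \<Rightarrow> ('a \<Rightarrow> 'a \<Rightarrow> bool) \<Rightarrow> bool" where
  "has_induced_P3P1 V E \<longleftrightarrow> (\<exists>f :: nat \<Rightarrow> 'a. inj_on f {0..3} \<and> f ` {0..3} \<subseteq> V
      \<and> (\<forall>i\<in>{0..3}. \<forall>j\<in>{0..3}. E (f i) (f j) \<longleftrightarrow> P3P1_edge i j))"

definition P3P1_free :: "'a set \<Rightarrow> ('a \<Rightarrow> 'a \<Rightarrow> bool) \<Rightarrow> bool" where
  "P3P1_free V E \<longleftrightarrow> \<not> has_induced_P3P1 V E"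

end

theory Submission
  imports Defs "HOL-Library.FuncSet"
begin

text \<open>The argument is organised around optimal colourings, that is, proper colourings with the
  fewest colours. For every vertex set \<open>S\<close> of the graph two properties are proved by induction
  on \<open>card S\<close>: every colouring reaches an optimal one in \<open>card S\<close> moves, and an optimal
  colouring with a free palette colour can be made to have the colour classes of any other
  optimal colouring in \<open>2 * card S\<close> moves. If \<open>S\<close> has no independent set of size three, colour
  classes have at most two vertices and both properties follow by counting pairs of vertices on
  which the two partitions disagree. Otherwise \<open>(P\<^sub>3 + P\<^sub>1)\<close>-freeness splits \<open>S\<close> into a part
  completely joined to a nonempty \<open>P\<^sub>3\<close>-free part, a disjoint union of cliques,
  where both properties are direct; and the properties pass to complete joins. With at least
  \<open>\<chi> + 1\<close> colours a free colour always exists, and two colourings with the same classes are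
  \<open>2n\<close> moves apart, so any two colourings are joined in \<open>n + 2n + 2n + n = 6n\<close> moves.\<close>

section \<open>Recolouring sequences on a vertex set\<close>

definition proper_on :: "('a \<Rightarrow> 'a \<Rightarrow> bool) \<Rightarrow> 'a set \<Rightarrow> nat set \<Rightarrow> ('a \<Rightarrow> nat) \<Rightarrow> bool" where
  "proper_on E S W \<phi> \<longleftrightarrow> (\<forall>v\<in>S. \<phi> v \<in> W) \<and> (\<forall>u\<in>S. \<forall>v\<in>S. E u v \<longrightarrow> \<phi> u \<noteq> \<phi> v)"

definition recolour_step ::
    "('a \<Rightarrow> 'a \<Rightarrow> bool) \<Rightarrow> 'a set \<Rightarrow> nat set \<Rightarrow> ('a \<Rightarrow> nat) \<Rightarrow> ('a \<Rightarrow> nat) \<Rightarrow> bool" where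
  "recolour_step E S W \<phi> \<psi> \<longleftrightarrow> (\<exists>v\<in>S. \<exists>c\<in>W. c \<noteq> \<phi> v \<and> (\<forall>u\<in>S. E v u \<longrightarrow> \<phi> u \<noteq> c)
      \<and> (\<forall>x\<in>S. \<psi> x = (if x = v then c else \<phi> x)))"

inductive recolour_reach ::
    "('a \<Rightarrow> 'a \<Rightarrow> bool) \<Rightarrow> 'a set \<Rightarrow> nat set \<Rightarrow> nat \<Rightarrow> ('a \<Rightarrow> nat) \<Rightarrow> ('a \<Rightarrow> nat) \<Rightarrow> bool"
  for E S W where
  reach_agree: "(\<forall>x\<in>S. \<phi> x = \<psi> x) \<Longrightarrow> recolour_reach E S W k \<phi> \<psi>"
| reach_step: "recolour_step E S W \<phi> \<chi> \<Longrightarrow> recolour_reach E S W k \<chi> \<psi> \<Longrightarrow>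
    recolour_reach E S W (Suc k) \<phi> \<psi>"

lemma reach_refl: "recolour_reach E S W k \<phi> \<phi>"
  by (simp add: reach_agree)

lemma recolour_step_agree_left:
  "recolour_step E S W \<phi> \<chi> \<Longrightarrow> \<forall>x\<in>S. \<phi>' x = \<phi> x \<Longrightarrow> recolour_step E S W \<phi>' \<chi>"
  unfolding recolour_step_def by metis

lemma reach_agree_left:
  "recolour_reach E S W k \<phi> \<psi> \<Longrightarrow> \<forall>x\<in>S. \<phi>' x = \<phi> x \<Longrightarrow> recolour_reach E S W k \<phi>' \<psi>"
  by (cases rule: recolour_reach.cases) (auto intro: reach_agree reach_step recolour_step_agree_left)

lemma reach_agree_right:
  "recolour_reach E S W k \<phi> \<psi> \<Longrightarrow> \<forall>x\<in>S. \<psi> x = \<psi>' x \<Longrightarrow> recolour_reach E S W k \<phi> \<psi>'"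
  by (induction rule: recolour_reach.induct) (auto intro: reach_agree reach_step)

lemma reach_mono: "recolour_reach E S W k \<phi> \<psi> \<Longrightarrow> k \<le> k' \<Longrightarrow> recolour_reach E S W k' \<phi> \<psi>"
proof (induction arbitrary: k' rule: recolour_reach.induct)
  case (reach_agree \<phi> \<psi> k)
  then show ?case by (simp add: recolour_reach.reach_agree)
next
  case (reach_step \<phi> \<chi> k \<psi>)
  then obtain j where "k' = Suc j" "k \<le> j" by (cases k') auto
  with reach_step show ?case by (auto intro: recolour_reach.reach_step)
qed

lemma reach_trans:
  "recolour_reach E S W k\<^sub>1 \<phi> \<psi> \<Longrightarrow> recolour_reach E S W k\<^sub>2 \<psi> \<chi> \<Longrightarrow>
    recolour_reach E S W (k\<^sub>1 + k\<^sub>2) \<phi> \<chi>"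
proof (induction rule: recolour_reach.induct)
  case (reach_agree \<phi> \<psi> k)
  then show ?case by (auto intro: reach_mono reach_agree_left)
next
  case (reach_step \<phi> \<chi>' k \<psi>)
  then show ?case by (simp add: recolour_reach.reach_step)
qed

lemma reach_single: "recolour_step E S W \<phi> \<psi> \<Longrightarrow> recolour_reach E S W 1 \<phi> \<psi>"
  using reach_step[OF _ reach_refl] by simp

lemma reach_palette_mono: "recolour_reach E S W k \<phi> \<psi> \<Longrightarrow> W \<subseteq> W' \<Longrightarrow> recolour_reach E S W' k \<phi> \<psi>"
proof (induction rule: recolour_reach.induct)
  case (reach_agree \<phi> \<psi> k)
  then show ?case by (simp add: recolour_reach.reach_agree)
next
  case (reach_step \<phi> \<chi> k \<psi>)
  then have "recolour_step E S W' \<phi> \<chi>" unfolding recolour_step_def by blast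
  with reach_step show ?case by (simp add: recolour_reach.reach_step)
qed

lemma proper_on_agree: "proper_on E S W \<phi> \<Longrightarrow> \<forall>x\<in>S. \<phi> x = \<psi> x \<Longrightarrow> proper_on E S W \<psi>"
  unfolding proper_on_def by metis

lemma proper_on_mono: "proper_on E S W \<phi> \<Longrightarrow> A \<subseteq> S \<Longrightarrow> W \<subseteq> W' \<Longrightarrow> proper_on E A W' \<phi>"
  unfolding proper_on_def by blast

lemma proper_on_step:
  assumes "symp E" "recolour_step E S W \<phi> \<psi>" "proper_on E S W \<phi>"
  shows "proper_on E S W \<psi>"
proof -
  obtain v c where "v \<in> S" "c \<in> W" "\<forall>u\<in>S. E v u \<longrightarrow> \<phi> u \<noteq> c"
    and \<psi>: "\<forall>x\<in>S. \<psi> x = (if x = v then c else \<phi> x)"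
    using assms(2) unfolding recolour_step_def by blast
  with assms(1,3) show ?thesis
    unfolding proper_on_def by (smt (verit) sympD)
qed

lemma proper_on_reach:
  "recolour_reach E S W k \<phi> \<psi> \<Longrightarrow> symp E \<Longrightarrow> proper_on E S W \<phi> \<Longrightarrow> proper_on E S W \<psi>"
  by (induction rule: recolour_reach.induct) (auto intro: proper_on_agree proper_on_step)

lemma recolour_step_reverse:
  assumes "recolour_step E S W \<phi> \<chi>" "proper_on E S W \<phi>"
  shows "recolour_step E S W \<chi> \<phi>"
proof -
  obtain v c where v: "v \<in> S" "c \<noteq> \<phi> v" and \<chi>: "\<forall>x\<in>S. \<chi> x = (if x = v then c else \<phi> x)"
    using assms(1) unfolding recolour_step_def by blast
  have "\<phi> v \<in> W" "\<forall>u\<in>S. E v u \<longrightarrow> \<chi> u \<noteq> \<phi> v"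
    using assms(2) v \<chi> unfolding proper_on_def by (metis, metis)
  with v \<chi> show ?thesis
    unfolding recolour_step_def by (intro bexI[of _ v] bexI[of _ "\<phi> v"]) auto
qed

lemma reach_reverse:
  "recolour_reach E S W k \<phi> \<psi> \<Longrightarrow> symp E \<Longrightarrow> proper_on E S W \<phi> \<Longrightarrow> recolour_reach E S W k \<psi> \<phi>"
proof (induction rule: recolour_reach.induct)
  case (reach_agree \<phi> \<psi> k)
  then show ?case by (simp add: recolour_reach.reach_agree)
next
  case (reach_step \<phi> \<chi> k \<psi>)
  then have "recolour_reach E S W k \<psi> \<chi>" by (blast intro: proper_on_step)
  with reach_step show ?case
    using reach_trans[OF _ reach_single[OF recolour_step_reverse]] by fastforce
qed

lemma recolour_step_override_on:
  assumes "recolour_step E A W \<phi> \<chi>" "A \<subseteq> S" "\<forall>x\<in>A. \<phi>' x = \<phi> x"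
    and "\<forall>w\<in>S - A. \<forall>v\<in>A. E v w \<longrightarrow> \<phi>' w \<notin> W"
  shows "recolour_step E S W \<phi>' (override_on \<phi>' \<chi> A)"
  using assms unfolding recolour_step_def override_on_def by (smt (verit) DiffI subsetD)

lemma reach_override_on:
  assumes "recolour_reach E A W k \<phi> \<psi>" "A \<subseteq> S" "\<forall>x\<in>A. \<phi>' x = \<phi> x"
    and "\<forall>w\<in>S - A. \<forall>v\<in>A. E v w \<longrightarrow> \<phi>' w \<notin> W"
  shows "recolour_reach E S W k \<phi>' (override_on \<phi>' \<psi> A)"
  using assms
proof (induction arbitrary: \<phi>' rule: recolour_reach.induct)
  case (reach_agree \<phi> \<psi> k)
  then show ?case by (intro recolour_reach.reach_agree) (simp add: override_on_def)
next
  case (reach_step \<phi> \<chi> k \<psi>)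
  let ?\<chi>' = "override_on \<phi>' \<chi> A"
  have "recolour_step E S W \<phi>' ?\<chi>'"
    using recolour_step_override_on reach_step.hyps(1) reach_step.prems by blast
  moreover have "recolour_reach E S W k ?\<chi>' (override_on ?\<chi>' \<psi> A)"
    using reach_step.IH reach_step.prems by (simp add: override_on_def)
  moreover have "override_on ?\<chi>' \<psi> A = override_on \<phi>' \<psi> A"
    by (simp add: override_on_def fun_eq_iff)
  ultimately show ?case by (metis recolour_reach.reach_step)
qed

section \<open>Recolouring to prescribed colour classes\<close>

definition same_classes :: "'a set \<Rightarrow> ('a \<Rightarrow> nat) \<Rightarrow> ('a \<Rightarrow> nat) \<Rightarrow> bool" where
  "same_classes S \<phi> \<psi> \<longleftrightarrow> (\<forall>u\<in>S. \<forall>v\<in>S. \<phi> u = \<phi> v \<longleftrightarrow> \<psi> u = \<psi> v)"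

lemma same_classes_card_image:
  assumes "same_classes S \<phi> \<psi>"
  shows "card (\<phi> ` S) = card (\<psi> ` S)"
proof -
  let ?P = "(\<lambda>x. (\<phi> x, \<psi> x)) ` S"
  have "inj_on fst ?P" "inj_on snd ?P"
    using assms unfolding same_classes_def inj_on_def by auto
  moreover have "fst ` ?P = \<phi> ` S" "snd ` ?P = \<psi> ` S"
    by (auto simp: image_image)
  ultimately show ?thesis by (metis card_image)
qed

lemma reach_recolour_monochromatic:
  assumes \<phi>: "proper_on E S W \<phi>" and "finite A" and A: "A \<subseteq> {x\<in>S. \<phi> x = a}"
    and b: "b \<in> W" "b \<notin> \<phi> ` S"
  shows "recolour_reach E S W (card A) \<phi> (override_on \<phi> (\<lambda>_. b) A)"
  using \<open>finite A\<close> A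
proof (induction rule: finite_induct)
  case empty
  show ?case by (simp add: reach_refl)
next
  case (insert x B)
  have "recolour_step E S W (override_on \<phi> (\<lambda>_. b) B) (override_on \<phi> (\<lambda>_. b) (insert x B))"
    unfolding recolour_step_def
  proof (intro bexI[of _ x] bexI[of _ b] conjI ballI impI)
    fix u assume "u \<in> S" "E x u"
    \<comment> \<open>neighbours of \<open>x\<close> lie outside its colour class, so they keep their old colour\<close>
    then have "u \<notin> B" using \<phi> insert.prems unfolding proper_on_def by fastforce
    then show "override_on \<phi> (\<lambda>_. b) B u \<noteq> b"
      using \<open>u \<in> S\<close> b(2) by (metis image_eqI override_on_apply_notin)
  qed (use insert b in \<open>auto simp: override_on_def\<close>)
  then show ?case
    using reach_trans[OF insert.IH reach_single] insert by simp
qed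

lemma recolour_class:
  assumes "proper_on E S W \<phi>" "A = {x\<in>S. \<phi> x = a}" "finite A" "b \<in> W" "b \<notin> \<phi> ` S"
  shows "recolour_reach E S W (card A) \<phi> (override_on \<phi> (\<lambda>_. b) A)"
    and "proper_on E S W (override_on \<phi> (\<lambda>_. b) A)"
    and "same_classes S (override_on \<phi> (\<lambda>_. b) A) \<phi>"
    and "a \<notin> override_on \<phi> (\<lambda>_. b) A ` S"
proof -
  show "recolour_reach E S W (card A) \<phi> (override_on \<phi> (\<lambda>_. b) A)"
    using reach_recolour_monochromatic assms by blast
  show "proper_on E S W (override_on \<phi> (\<lambda>_. b) A)"
    unfolding proper_on_def
  proof (intro conjI ballI impI)
    fix x assume "x \<in> S"
    then show "override_on \<phi> (\<lambda>_. b) A x \<in> W"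
      using assms(1,4) unfolding proper_on_def override_on_def by auto
  next
    fix u v assume "u \<in> S" "v \<in> S" "E u v"
    then have "\<phi> u \<noteq> \<phi> v" using assms(1) unfolding proper_on_def by blast
    then show "override_on \<phi> (\<lambda>_. b) A u \<noteq> override_on \<phi> (\<lambda>_. b) A v"
      using assms(2,5) \<open>u \<in> S\<close> \<open>v \<in> S\<close> by (auto simp: override_on_def)
  qed
  show "same_classes S (override_on \<phi> (\<lambda>_. b) A) \<phi>"
    using assms unfolding same_classes_def override_on_def by auto
  show "a \<notin> override_on \<phi> (\<lambda>_. b) A ` S"
    using assms unfolding override_on_def by auto
qed

text \<open>Mismatched vertices whose colour still occurs in \<open>\<psi>\<close> count twice: their class may have
  to move twice, first to a free colour and then to its target.\<close>
definition mismatch_weight :: "'a set \<Rightarrow> ('a \<Rightarrow> nat) \<Rightarrow> ('a \<Rightarrow> nat) \<Rightarrow> nat" where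
  "mismatch_weight S \<phi> \<psi> =
     card {x\<in>S. \<phi> x \<noteq> \<psi> x} + card {x\<in>S. \<phi> x \<noteq> \<psi> x \<and> \<phi> x \<in> \<psi> ` S}"

lemma mismatch_weight_le:
  assumes "finite S"
  shows "mismatch_weight S \<phi> \<psi> \<le> 2 * card S"
proof -
  have "card {x\<in>S. \<phi> x \<noteq> \<psi> x} \<le> card S" "card {x\<in>S. \<phi> x \<noteq> \<psi> x \<and> \<phi> x \<in> \<psi> ` S} \<le> card S"
    using assms by (auto intro: card_mono)
  then show ?thesis unfolding mismatch_weight_def by linarith
qed

lemma obtain_recolour_target:
  assumes fin: "finite S" and \<psi>: "proper_on E S W \<psi>" and same: "same_classes S \<phi> \<psi>"
    and s: "s \<in> W" "s \<notin> \<phi> ` S" and mismatch: "\<exists>v\<in>S. \<phi> v \<noteq> \<psi> v"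
  obtains v b where "v \<in> S" "\<phi> v \<noteq> \<psi> v" "b \<in> W" "b \<notin> \<phi> ` S"
    "b = \<psi> v \<or> (b \<notin> \<psi> ` S \<and> \<phi> v \<in> \<psi> ` S)"
proof (cases "\<exists>v\<in>S. \<phi> v \<noteq> \<psi> v \<and> \<psi> v \<notin> \<phi> ` S")
  case True
  then obtain v where "v \<in> S" "\<phi> v \<noteq> \<psi> v" "\<psi> v \<notin> \<phi> ` S" by blast
  moreover have "\<psi> v \<in> W" using \<psi> \<open>v \<in> S\<close> unfolding proper_on_def by blast
  ultimately show ?thesis using that by blast
next
  case False
  then have "\<psi> ` S \<subseteq> \<phi> ` S" by (metis image_eqI image_subsetI)
  moreover have "card (\<psi> ` S) = card (\<phi> ` S)" using same_classes_card_image[OF same] by simp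
  ultimately have "\<psi> ` S = \<phi> ` S" using fin by (simp add: card_subset_eq)
  moreover obtain v where "v \<in> S" "\<phi> v \<noteq> \<psi> v" using mismatch by blast
  ultimately show ?thesis using that s by (metis image_eqI)
qed

lemma mismatch_weight_recolour_class:
  assumes fin: "finite S" and same: "same_classes S \<phi> \<psi>" and v: "v \<in> S" "\<phi> v \<noteq> \<psi> v"
    and A: "A = {x\<in>S. \<phi> x = \<phi> v}" and target: "b = \<psi> v \<or> (b \<notin> \<psi> ` S \<and> \<phi> v \<in> \<psi> ` S)"
  shows "card A + mismatch_weight S (override_on \<phi> (\<lambda>_. b) A) \<psi> \<le> mismatch_weight S \<phi> \<psi>"
proof -
  define M where "M = {x\<in>S. \<phi> x \<noteq> \<psi> x}"
  define M\<^sub>2 where "M\<^sub>2 = {x\<in>S. \<phi> x \<noteq> \<psi> x \<and> \<phi> x \<in> \<psi> ` S}"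
  define \<phi>' where "\<phi>' = override_on \<phi> (\<lambda>_. b) A"
  have finM: "finite M" "finite M\<^sub>2" unfolding M\<^sub>2_def M_def using fin by simp_all
  have A\<psi>: "A = {x\<in>S. \<psi> x = \<psi> v}" using same v unfolding A same_classes_def by auto
  have AM: "A \<subseteq> M"
  proof
    fix x assume "x \<in> A"
    then have "\<phi> x = \<phi> v" "\<psi> x = \<psi> v" "x \<in> S" using A\<psi> unfolding A by auto
    then show "x \<in> M" using v unfolding M_def by auto
  qed
  have "{x\<in>S. \<phi>' x \<noteq> \<psi> x \<and> \<phi>' x \<in> \<psi> ` S} = M\<^sub>2 - A"
    using target A\<psi> unfolding \<phi>'_def M\<^sub>2_def M_def override_on_def by auto
  then have weight': "mismatch_weight S \<phi>' \<psi> = card {x\<in>S. \<phi>' x \<noteq> \<psi> x} + card (M\<^sub>2 - A)"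
    unfolding mismatch_weight_def by simp
  have weight: "mismatch_weight S \<phi> \<psi> = card M + card M\<^sub>2"
    unfolding mismatch_weight_def M\<^sub>2_def M_def ..
  from target show ?thesis
  proof
    assume "b = \<psi> v"
    then have "{x\<in>S. \<phi>' x \<noteq> \<psi> x} = M - A"
      using A\<psi> unfolding \<phi>'_def M_def override_on_def by auto
    moreover have "card (M - A) + card A = card M"
      using AM finM by (metis card_Diff_subset card_mono finite_subset le_add_diff_inverse2)
    moreover have "card (M\<^sub>2 - A) \<le> card M\<^sub>2" using finM by (simp add: card_mono)
    ultimately show ?thesis using weight weight' unfolding \<phi>'_def by simp
  next
    assume b\<psi>: "b \<notin> \<psi> ` S \<and> \<phi> v \<in> \<psi> ` S"
    then have "{x\<in>S. \<phi>' x \<noteq> \<psi> x} = M"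
      using AM unfolding \<phi>'_def M_def override_on_def by auto
    moreover have "A \<subseteq> M\<^sub>2" using b\<psi> AM unfolding M\<^sub>2_def M_def A by auto
    then have "card (M\<^sub>2 - A) + card A = card M\<^sub>2"
      using finM by (metis card_Diff_subset card_mono finite_subset le_add_diff_inverse2)
    ultimately show ?thesis using weight weight' unfolding \<phi>'_def by simp
  qed
qed

lemma same_classes_reach:
  assumes fin: "finite S" and \<phi>: "proper_on E S W \<phi>" and \<psi>: "proper_on E S W \<psi>"
    and same: "same_classes S \<phi> \<psi>" and free: "\<exists>s\<in>W. s \<notin> \<phi> ` S"
  shows "recolour_reach E S W (2 * card S) \<phi> \<psi>"
proof -
  have "recolour_reach E S W (mismatch_weight S \<phi> \<psi>) \<phi> \<psi>"
    using \<phi> same free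
  proof (induction "mismatch_weight S \<phi> \<psi>" arbitrary: \<phi> rule: less_induct)
    case less
    show ?case
    proof (cases "\<exists>v\<in>S. \<phi> v \<noteq> \<psi> v")
      case True
      obtain v b where v: "v \<in> S" "\<phi> v \<noteq> \<psi> v" and b: "b \<in> W" "b \<notin> \<phi> ` S"
        and target: "b = \<psi> v \<or> (b \<notin> \<psi> ` S \<and> \<phi> v \<in> \<psi> ` S)"
        using obtain_recolour_target[OF fin \<psi> less.prems(2) _ _ True] less.prems(3) by metis
      define A where "A = {x\<in>S. \<phi> x = \<phi> v}"
      define \<phi>' where "\<phi>' = override_on \<phi> (\<lambda>_. b) A"
      have "finite A" "0 < card A" using fin v unfolding A_def by (auto simp: card_gt_0_iff)
      note moved = recolour_class[OF less.prems(1) A_def \<open>finite A\<close> b, folded \<phi>'_def]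
      note fewer = mismatch_weight_recolour_class[OF fin less.prems(2) v A_def target, folded \<phi>'_def]
      have "same_classes S \<phi>' \<psi>"
        using moved(3) less.prems(2) unfolding same_classes_def by auto
      moreover have "\<exists>s\<in>W. s \<notin> \<phi>' ` S"
        using moved(4) less.prems(1) v unfolding proper_on_def by auto
      ultimately have "recolour_reach E S W (mismatch_weight S \<phi>' \<psi>) \<phi>' \<psi>"
        using less.hyps moved(2) fewer \<open>0 < card A\<close> by simp
      then have "recolour_reach E S W (card A + mismatch_weight S \<phi>' \<psi>) \<phi> \<psi>"
        using reach_trans[OF moved(1)] by blast
      then show ?thesis using reach_mono fewer by blast
    qed (auto intro: reach_agree)
  qed
  then show ?thesis using reach_mono mismatch_weight_le[OF fin] by blast
qed

section \<open>Optimal colourings and complete joins\<close>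

definition optimal_on :: "('a \<Rightarrow> 'a \<Rightarrow> bool) \<Rightarrow> 'a set \<Rightarrow> ('a \<Rightarrow> nat) \<Rightarrow> bool" where
  "optimal_on E S \<phi> \<longleftrightarrow> proper_on E S UNIV \<phi>
     \<and> (\<forall>\<psi>. proper_on E S UNIV \<psi> \<longrightarrow> card (\<phi> ` S) \<le> card (\<psi> ` S))"

definition reaches_optimal :: "('a \<Rightarrow> 'a \<Rightarrow> bool) \<Rightarrow> 'a set \<Rightarrow> bool" where
  "reaches_optimal E S \<longleftrightarrow> (\<forall>\<phi> W. proper_on E S W \<phi> \<longrightarrow>
     (\<exists>\<phi>'. recolour_reach E S W (card S) \<phi> \<phi>' \<and> optimal_on E S \<phi>'))"

definition aligns_optimal :: "('a \<Rightarrow> 'a \<Rightarrow> bool) \<Rightarrow> 'a set \<Rightarrow> bool" where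
  "aligns_optimal E S \<longleftrightarrow> (\<forall>\<phi> \<psi> W. optimal_on E S \<phi> \<longrightarrow> optimal_on E S \<psi> \<longrightarrow> \<phi> ` S \<subseteq> W \<longrightarrow>
     (\<exists>r\<in>W. r \<notin> \<phi> ` S) \<longrightarrow> (\<exists>\<phi>'. recolour_reach E S W (2 * card S) \<phi> \<phi>' \<and> same_classes S \<phi>' \<psi>))"

lemma optimal_on_agree: "optimal_on E S \<phi> \<Longrightarrow> \<forall>x\<in>S. \<phi> x = \<phi>' x \<Longrightarrow> optimal_on E S \<phi>'"
  unfolding optimal_on_def by (metis image_cong proper_on_agree)

lemma optimal_on_proper_on: "optimal_on E S \<phi> \<Longrightarrow> \<phi> ` S \<subseteq> W \<Longrightarrow> proper_on E S W \<phi>"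
  unfolding optimal_on_def proper_on_def by auto

lemma optimal_on_same_classes:
  "optimal_on E S \<psi> \<Longrightarrow> proper_on E S W \<phi> \<Longrightarrow> same_classes S \<phi> \<psi> \<Longrightarrow> optimal_on E S \<phi>"
  unfolding optimal_on_def using same_classes_card_image proper_on_mono by (metis subset_UNIV order_refl)

lemma optimal_on_card_eq: "optimal_on E S \<phi> \<Longrightarrow> optimal_on E S \<psi> \<Longrightarrow> card (\<phi> ` S) = card (\<psi> ` S)"
  unfolding optimal_on_def by (simp add: le_antisym)

lemma unused_colour:
  assumes "finite S" "card (\<phi>' ` S) \<le> card (\<phi> ` S)" "\<phi> ` S \<subseteq> W" "r \<in> W" "r \<notin> \<phi> ` S"
  shows "\<exists>r'\<in>W. r' \<notin> \<phi>' ` S"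
proof (rule ccontr)
  assume "\<not> ?thesis"
  then have W: "W \<subseteq> \<phi>' ` S" by auto
  then have "finite W" using assms(1) finite_subset by blast
  moreover have "\<phi> ` S \<subset> W" using assms(3-5) by auto
  ultimately have "card (\<phi> ` S) < card W" by (rule psubset_card_mono)
  moreover have "card W \<le> card (\<phi>' ` S)" using W assms(1) card_mono by blast
  ultimately show False using assms(2) by simp
qed

locale complete_join =
  fixes E :: "'a \<Rightarrow> 'a \<Rightarrow> bool" and S A B :: "'a set"
  assumes finite: "finite S" and union: "S = A \<union> B" and disjoint: "A \<inter> B = {}"
    and complete: "\<And>a b. a \<in> A \<Longrightarrow> b \<in> B \<Longrightarrow> E a b" and symp: "symp E"
begin

lemma finite_left: "finite A" and finite_right: "finite B"
  using finite union by simp_all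

lemma image_disjoint: "proper_on E S W \<phi> \<Longrightarrow> \<phi> ` A \<inter> \<phi> ` B = {}"
  unfolding proper_on_def using complete union by fastforce

lemma card_image_union: "proper_on E S W \<phi> \<Longrightarrow> card (\<phi> ` S) = card (\<phi> ` A) + card (\<phi> ` B)"
  using image_disjoint finite_left finite_right union by (simp add: image_Un card_Un_disjoint)

lemma proper_on_left: "proper_on E S W \<phi> \<Longrightarrow> proper_on E A (\<phi> ` A) \<phi>"
  using union unfolding proper_on_def by auto

lemma proper_on_shift:
  assumes \<psi>: "proper_on E A UNIV \<psi>" and \<phi>: "proper_on E S UNIV \<phi>" and K: "\<And>b. b \<in> B \<Longrightarrow> \<phi> b < K"
  shows "proper_on E S UNIV (\<lambda>x. if x \<in> A then \<psi> x + K else \<phi> x)"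
  unfolding proper_on_def
proof (intro conjI ballI impI)
  fix x y assume xy: "x \<in> S" "y \<in> S" "E x y"
  consider "x \<in> A" "y \<in> A" | "x \<in> A" "y \<in> B" | "x \<in> B" "y \<in> A" | "x \<in> B" "y \<in> B"
    using xy union by blast
  then show "(if x \<in> A then \<psi> x + K else \<phi> x) \<noteq> (if y \<in> A then \<psi> y + K else \<phi> y)"
  proof cases
    case 1
    then show ?thesis using \<psi> xy unfolding proper_on_def by simp
  next
    case 2
    then show ?thesis using K[of y] disjoint by auto
  next
    case 3
    then show ?thesis using K[of x] disjoint by auto
  next
    case 4
    then have "x \<notin> A" "y \<notin> A" using disjoint by auto
    then show ?thesis using \<phi> xy unfolding proper_on_def by simp
  qed
qed simp

lemma card_image_shift:
  fixes \<phi> \<psi> :: "'a \<Rightarrow> nat"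
  assumes K: "\<And>b. b \<in> B \<Longrightarrow> \<phi> b < K"
  shows "card ((\<lambda>x. if x \<in> A then \<psi> x + K else \<phi> x) ` S) = card (\<psi> ` A) + card (\<phi> ` B)"
proof -
  have "(\<lambda>x. if x \<in> A then \<psi> x + K else \<phi> x) ` A = (\<lambda>c. c + K) ` \<psi> ` A"
    unfolding image_image by (rule image_cong) auto
  moreover have "(\<lambda>x. if x \<in> A then \<psi> x + K else \<phi> x) ` B = \<phi> ` B"
    using disjoint by (intro image_cong) auto
  moreover have "(\<lambda>c. c + K) ` \<psi> ` A \<inter> \<phi> ` B = {}" using K by fastforce
  ultimately show ?thesis
    unfolding union image_Un using finite_left finite_right by (simp add: card_Un_disjoint card_image)
qed

text \<open>Shifting a colouring of \<open>A\<close> above the colours that \<open>\<phi>\<close> uses on \<open>B\<close> gives a colouring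
  of \<open>S\<close>, so an optimal colouring of \<open>S\<close> is optimal on \<open>A\<close>.\<close>
lemma optimal_on_left:
  assumes opt: "optimal_on E S \<phi>"
  shows "optimal_on E A \<phi>"
  unfolding optimal_on_def
proof (intro conjI allI impI)
  have \<phi>: "proper_on E S UNIV \<phi>" using opt unfolding optimal_on_def by auto
  then show "proper_on E A UNIV \<phi>" using union proper_on_mono by blast
  fix \<psi> assume \<psi>: "proper_on E A UNIV \<psi>"
  define K where "K = Suc (Max (insert 0 (\<phi> ` B)))"
  have K: "\<phi> b < K" if "b \<in> B" for b
    unfolding K_def using finite_right that by (simp add: le_imp_less_Suc)
  have "card (\<phi> ` S) \<le> card ((\<lambda>x. if x \<in> A then \<psi> x + K else \<phi> x) ` S)"
    using opt proper_on_shift[OF \<psi> \<phi> K] unfolding optimal_on_def by blast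
  then show "card (\<phi> ` A) \<le> card (\<psi> ` A)"
    using card_image_shift[OF K] card_image_union[OF \<phi>] by simp
qed

lemma reach_left:
  assumes "recolour_reach E A W' k \<phi> \<psi>" "W' \<inter> \<phi> ` B = {}" "W' \<subseteq> W"
  shows "recolour_reach E S W k \<phi> (override_on \<phi> \<psi> A)"
proof -
  have "\<forall>w\<in>S - A. \<forall>v\<in>A. E v w \<longrightarrow> \<phi> w \<notin> W'"
    using assms(2) union by auto
  then have "recolour_reach E S W' k \<phi> (override_on \<phi> \<psi> A)"
    using reach_override_on[OF assms(1)] union by blast
  then show ?thesis using assms(3) by (rule reach_palette_mono)
qed

lemma optimal_on_join:
  assumes "proper_on E S W \<phi>" "optimal_on E A \<phi>" "optimal_on E B \<phi>"
  shows "optimal_on E S \<phi>"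
  unfolding optimal_on_def
proof (intro conjI allI impI)
  show "proper_on E S UNIV \<phi>" using assms(1) proper_on_mono by blast
  fix \<psi> assume \<psi>: "proper_on E S UNIV \<psi>"
  have "card (\<phi> ` A) \<le> card (\<psi> ` A)" "card (\<phi> ` B) \<le> card (\<psi> ` B)"
    using assms(2,3) \<psi> union proper_on_mono unfolding optimal_on_def by (metis Un_upper1 Un_upper2 order_refl)+
  then show "card (\<phi> ` S) \<le> card (\<psi> ` S)"
    using card_image_union[OF \<psi>] card_image_union[OF assms(1)] by simp
qed

lemma same_classes_join:
  assumes "proper_on E S W \<phi>" "proper_on E S W' \<psi>" "same_classes A \<phi> \<psi>" "same_classes B \<phi> \<psi>"
  shows "same_classes S \<phi> \<psi>"
  unfolding same_classes_def
proof (intro ballI)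
  fix x y assume xy: "x \<in> S" "y \<in> S"
  consider "x \<in> A" "y \<in> A" | "x \<in> A" "y \<in> B" | "x \<in> B" "y \<in> A" | "x \<in> B" "y \<in> B"
    using xy union by blast
  then show "\<phi> x = \<phi> y \<longleftrightarrow> \<psi> x = \<psi> y"
  proof cases
    case 2
    then have "E x y" by (rule complete)
    with assms(1,2) xy show ?thesis unfolding proper_on_def by metis
  next
    case 3
    then have "E x y" using complete sympD[OF symp] by blast
    with assms(1,2) xy show ?thesis unfolding proper_on_def by metis
  qed (use assms(3,4) in \<open>auto simp: same_classes_def\<close>)
qed

lemma reach_optimal_left:
  assumes "reaches_optimal E A" "proper_on E S W \<phi>"
  obtains \<phi>' where "recolour_reach E S W (card A) \<phi> \<phi>'" "optimal_on E A \<phi>'" "\<forall>x\<in>B. \<phi>' x = \<phi> x"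
proof -
  obtain \<phi>\<^sub>A where A: "recolour_reach E A (\<phi> ` A) (card A) \<phi> \<phi>\<^sub>A" "optimal_on E A \<phi>\<^sub>A"
    using assms proper_on_left unfolding reaches_optimal_def by blast
  have "recolour_reach E S W (card A) \<phi> (override_on \<phi> \<phi>\<^sub>A A)"
    using reach_left[OF A(1)] image_disjoint[OF assms(2)] assms(2) union
    unfolding proper_on_def by blast
  moreover have "optimal_on E A (override_on \<phi> \<phi>\<^sub>A A)"
    by (rule optimal_on_agree[OF A(2)]) simp
  moreover have "\<forall>x\<in>B. override_on \<phi> \<phi>\<^sub>A A x = \<phi> x" using disjoint by (auto simp: override_on_def)
  ultimately show ?thesis using that by blast
qed

lemma align_optimal_left:
  assumes "aligns_optimal E A" "optimal_on E S \<phi>" "optimal_on E S \<psi>"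
    and W: "\<phi> ` S \<subseteq> W" and r: "r \<in> W" "r \<notin> \<phi> ` S"
  obtains \<phi>' where "recolour_reach E S W (2 * card A) \<phi> \<phi>'" "proper_on E S W \<phi>'"
    "same_classes A \<phi>' \<psi>" "\<forall>x\<in>B. \<phi>' x = \<phi> x"
proof -
  have \<phi>: "proper_on E S W \<phi>" using optimal_on_proper_on[OF assms(2) W] .
  obtain \<phi>\<^sub>A where A: "recolour_reach E A (insert r (\<phi> ` A)) (2 * card A) \<phi> \<phi>\<^sub>A"
      "same_classes A \<phi>\<^sub>A \<psi>"
    using assms(1) optimal_on_left[OF assms(2)] optimal_on_left[OF assms(3)] r union
    unfolding aligns_optimal_def by blast
  have reach: "recolour_reach E S W (2 * card A) \<phi> (override_on \<phi> \<phi>\<^sub>A A)"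
    using reach_left[OF A(1)] image_disjoint[OF \<phi>] r W union by blast
  moreover have "same_classes A (override_on \<phi> \<phi>\<^sub>A A) \<psi>"
    using A(2) unfolding same_classes_def by simp
  moreover have "\<forall>x\<in>B. override_on \<phi> \<phi>\<^sub>A A x = \<phi> x" using disjoint by (auto simp: override_on_def)
  ultimately show ?thesis using that proper_on_reach[OF reach symp \<phi>] by blast
qed

end

sublocale complete_join \<subseteq> swap: complete_join E S B A
  using finite union disjoint complete symp by unfold_locales (auto dest: sympD)

context complete_join
begin

lemma reaches_optimal_join:
  assumes "reaches_optimal E A" "reaches_optimal E B"
  shows "reaches_optimal E S"
  unfolding reaches_optimal_def
proof (intro allI impI)
  fix \<phi> W assume \<phi>: "proper_on E S W \<phi>"
  obtain \<phi>\<^sub>1 where reach\<^sub>1: "recolour_reach E S W (card A) \<phi> \<phi>\<^sub>1" and "optimal_on E A \<phi>\<^sub>1"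
    using reach_optimal_left[OF assms(1) \<phi>] by blast
  have \<phi>\<^sub>1: "proper_on E S W \<phi>\<^sub>1" using proper_on_reach[OF reach\<^sub>1 symp \<phi>] .
  obtain \<phi>\<^sub>2 where reach\<^sub>2: "recolour_reach E S W (card B) \<phi>\<^sub>1 \<phi>\<^sub>2" and "optimal_on E B \<phi>\<^sub>2"
    and "\<forall>x\<in>A. \<phi>\<^sub>2 x = \<phi>\<^sub>1 x"
    using swap.reach_optimal_left[OF assms(2) \<phi>\<^sub>1] by blast
  then have "optimal_on E A \<phi>\<^sub>2"
    using optimal_on_agree[OF \<open>optimal_on E A \<phi>\<^sub>1\<close>] by simp
  moreover have reach: "recolour_reach E S W (card S) \<phi> \<phi>\<^sub>2"
    using reach_trans[OF reach\<^sub>1 reach\<^sub>2] finite_left finite_right disjoint union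
    by (simp add: card_Un_disjoint)
  ultimately have "optimal_on E S \<phi>\<^sub>2"
    using optimal_on_join proper_on_reach[OF reach symp \<phi>] \<open>optimal_on E B \<phi>\<^sub>2\<close> by blast
  with reach show "\<exists>\<phi>'. recolour_reach E S W (card S) \<phi> \<phi>' \<and> optimal_on E S \<phi>'" by blast
qed

lemma aligns_optimal_join:
  assumes "aligns_optimal E A" "aligns_optimal E B"
  shows "aligns_optimal E S"
  unfolding aligns_optimal_def
proof (intro allI impI)
  fix \<phi> \<psi> W assume opt: "optimal_on E S \<phi>" "optimal_on E S \<psi>" and W: "\<phi> ` S \<subseteq> W"
    and "\<exists>r\<in>W. r \<notin> \<phi> ` S"
  then obtain r where r: "r \<in> W" "r \<notin> \<phi> ` S" by blast
  have \<psi>: "proper_on E S UNIV \<psi>" using opt(2) unfolding optimal_on_def by blast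
  obtain \<phi>\<^sub>1 where reach\<^sub>1: "recolour_reach E S W (2 * card A) \<phi> \<phi>\<^sub>1" and \<phi>\<^sub>1: "proper_on E S W \<phi>\<^sub>1"
    and same\<^sub>1: "same_classes A \<phi>\<^sub>1 \<psi>" and "\<forall>x\<in>B. \<phi>\<^sub>1 x = \<phi> x"
    using align_optimal_left[OF assms(1) opt W r] by blast
  then have "optimal_on E B \<phi>\<^sub>1" using optimal_on_agree[OF swap.optimal_on_left[OF opt(1)]] by simp
  moreover have "optimal_on E A \<phi>\<^sub>1"
    using optimal_on_same_classes[OF optimal_on_left[OF opt(2)] _ same\<^sub>1] \<phi>\<^sub>1 proper_on_left by blast
  ultimately have opt\<^sub>1: "optimal_on E S \<phi>\<^sub>1" using optimal_on_join[OF \<phi>\<^sub>1] by blast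
  have W\<^sub>1: "\<phi>\<^sub>1 ` S \<subseteq> W" using \<phi>\<^sub>1 unfolding proper_on_def by blast
  obtain r' where r': "r' \<in> W" "r' \<notin> \<phi>\<^sub>1 ` S"
    using unused_colour[OF finite _ W r] optimal_on_card_eq[OF opt\<^sub>1 opt(1)] by (metis order_refl)
  obtain \<phi>\<^sub>2 where reach\<^sub>2: "recolour_reach E S W (2 * card B) \<phi>\<^sub>1 \<phi>\<^sub>2" and \<phi>\<^sub>2: "proper_on E S W \<phi>\<^sub>2"
    and "same_classes B \<phi>\<^sub>2 \<psi>" "\<forall>x\<in>A. \<phi>\<^sub>2 x = \<phi>\<^sub>1 x"
    using swap.align_optimal_left[OF assms(2) opt\<^sub>1 opt(2) W\<^sub>1 r'] by blast
  moreover from this have "same_classes A \<phi>\<^sub>2 \<psi>" using same\<^sub>1 unfolding same_classes_def by simp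
  ultimately have "same_classes S \<phi>\<^sub>2 \<psi>" using same_classes_join[OF \<phi>\<^sub>2 \<psi>] by blast
  moreover have "recolour_reach E S W (2 * card S) \<phi> \<phi>\<^sub>2"
    using reach_trans[OF reach\<^sub>1 reach\<^sub>2] finite_left finite_right disjoint union
    by (simp add: card_Un_disjoint algebra_simps)
  ultimately show "\<exists>\<phi>'. recolour_reach E S W (2 * card S) \<phi> \<phi>' \<and> same_classes S \<phi>' \<psi>" by blast
qed

end

section \<open>\<open>P\<^sub>3\<close>-free graphs\<close>

definition P3_free_on :: "('a \<Rightarrow> 'a \<Rightarrow> bool) \<Rightarrow> 'a set \<Rightarrow> bool" where
  "P3_free_on E S \<longleftrightarrow> (\<forall>u\<in>S. \<forall>v\<in>S. \<forall>w\<in>S. E u v \<longrightarrow> E v w \<longrightarrow> u \<noteq> w \<longrightarrow> E u w)"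

definition clique_on :: "('a \<Rightarrow> 'a \<Rightarrow> bool) \<Rightarrow> 'a set \<Rightarrow> bool" where
  "clique_on E K \<longleftrightarrow> (\<forall>x\<in>K. \<forall>y\<in>K. x \<noteq> y \<longrightarrow> E x y)"

lemma inj_on_clique: "proper_on E S W \<phi> \<Longrightarrow> K \<subseteq> S \<Longrightarrow> clique_on E K \<Longrightarrow> inj_on \<phi> K"
  unfolding inj_on_def proper_on_def clique_on_def by blast

lemma obtain_max_card_subset:
  assumes "finite S" "P T" "T \<subseteq> S"
  obtains I where "P I" "I \<subseteq> S" "\<And>J. P J \<Longrightarrow> J \<subseteq> S \<Longrightarrow> card J \<le> card I"
proof -
  have "\<forall>J. P J \<and> J \<subseteq> S \<longrightarrow> card J < Suc (card S)"
    using assms(1) by (simp add: card_mono less_Suc_eq_le)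
  then show ?thesis
    using ex_has_greatest_nat[of "\<lambda>J. P J \<and> J \<subseteq> S" T card "Suc (card S)"] assms(2,3) that by blast
qed

lemma P3_free_on_subset: "P3_free_on E S \<Longrightarrow> A \<subseteq> S \<Longrightarrow> P3_free_on E A"
  unfolding P3_free_on_def by blast

lemma P3_free_closed_neighbourhood:
  assumes P3: "P3_free_on E S" and sym: "symp E" and v: "v \<in> S"
  shows "clique_on E {u\<in>S. u = v \<or> E v u}"
    and "\<And>u w. u \<in> S \<Longrightarrow> u = v \<or> E v u \<Longrightarrow> w \<in> S \<Longrightarrow> E u w \<Longrightarrow> w = v \<or> E v w"
proof -
  have adj: "E x y" if "x \<in> S" "y \<in> S" "x \<noteq> y" "E v x" "E v y" for x y
    using P3 v that sympD[OF sym] unfolding P3_free_on_def by blast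
  show "clique_on E {u\<in>S. u = v \<or> E v u}"
    unfolding clique_on_def using adj sympD[OF sym] by blast
  show "w = v \<or> E v w" if "u \<in> S" "u = v \<or> E v u" "w \<in> S" "E u w" for u w
    using P3 v that unfolding P3_free_on_def by blast
qed

text \<open>The closed neighbourhood of \<open>v\<close> is a clique, hence no larger than a maximum clique \<open>K\<close>;
  so some colour of \<open>\<phi> ` K\<close> is missing around \<open>v\<close>.\<close>
lemma P3_free_clique_colour_available:
  assumes fin: "finite S" and P3: "P3_free_on E S" and sym: "symp E"
    and K: "K \<subseteq> S" "clique_on E K" and max: "\<And>K'. clique_on E K' \<Longrightarrow> K' \<subseteq> S \<Longrightarrow> card K' \<le> card K"
    and \<phi>: "proper_on E S W \<phi>" and v: "v \<in> S"
  obtains z where "z \<in> \<phi> ` K" "\<forall>u\<in>S. E v u \<longrightarrow> \<phi> u \<noteq> z"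
proof -
  define N where "N = {u\<in>S. E v u}"
  have finN: "finite N" using fin unfolding N_def by simp
  have "v \<notin> N" using \<phi> v unfolding N_def proper_on_def by blast
  have "insert v N = {u\<in>S. u = v \<or> E v u}" using v unfolding N_def by auto
  then have "clique_on E (insert v N)" "insert v N \<subseteq> S"
    using P3_free_closed_neighbourhood(1)[OF P3 sym v] by auto
  then have "card (insert v N) \<le> card K" by (rule max)
  then have "card N < card K" using \<open>v \<notin> N\<close> finN by simp
  also have "card K = card (\<phi> ` K)" using inj_on_clique[OF \<phi> K] by (simp add: card_image)
  finally have "card (\<phi> ` N) < card (\<phi> ` K)" using card_image_le[OF finN, of \<phi>] by linarith
  then have "\<not> \<phi> ` K \<subseteq> \<phi> ` N"
    using card_mono[OF finite_imageI[OF finN], of "\<phi> ` K" \<phi>] by linarith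
  then obtain z where "z \<in> \<phi> ` K" "z \<notin> \<phi> ` N" by blast
  moreover from this have "\<forall>u\<in>S. E v u \<longrightarrow> \<phi> u \<noteq> z" unfolding N_def by (auto simp: image_iff)
  ultimately show ?thesis using that by blast
qed

lemma P3_free_recolour_into_clique:
  assumes fin: "finite S" and P3: "P3_free_on E S" and sym: "symp E"
    and K: "K \<subseteq> S" "clique_on E K" and max: "\<And>K'. clique_on E K' \<Longrightarrow> K' \<subseteq> S \<Longrightarrow> card K' \<le> card K"
  shows "proper_on E S W \<phi> \<Longrightarrow>
    \<exists>\<phi>'. recolour_reach E S W (card {v\<in>S. \<phi> v \<notin> \<phi> ` K}) \<phi> \<phi>' \<and> (\<forall>x\<in>S. \<phi>' x \<in> \<phi> ` K)"
proof (induction "card {v\<in>S. \<phi> v \<notin> \<phi> ` K}" arbitrary: \<phi>)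
  case 0
  then have "\<forall>x\<in>S. \<phi> x \<in> \<phi> ` K" using fin by auto
  then show ?case using reach_refl by blast
next
  case (Suc m \<phi>)
  have "{v\<in>S. \<phi> v \<notin> \<phi> ` K} \<noteq> {}" using Suc.hyps(2) by force
  then obtain v where v: "v \<in> S" "\<phi> v \<notin> \<phi> ` K" by blast
  obtain z where z: "z \<in> \<phi> ` K" "\<forall>u\<in>S. E v u \<longrightarrow> \<phi> u \<noteq> z"
    using P3_free_clique_colour_available[OF fin P3 sym K max Suc.prems v(1)] by blast
  have "z \<in> W" using z(1) K(1) Suc.prems unfolding proper_on_def by auto
  define \<phi>' where "\<phi>' = \<phi>(v := z)"
  have step: "recolour_step E S W \<phi> \<phi>'"
    unfolding recolour_step_def \<phi>'_def
    using v z \<open>z \<in> W\<close> by (intro bexI[of _ v] bexI[of _ z]) (auto simp: image_iff)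
  have "v \<notin> K" using v by auto
  then have K': "\<phi>' ` K = \<phi> ` K" unfolding \<phi>'_def by (intro image_cong) auto
  then have "{x\<in>S. \<phi>' x \<notin> \<phi>' ` K} = {x\<in>S. \<phi> x \<notin> \<phi> ` K} - {v}"
    using z unfolding \<phi>'_def by auto
  then have m: "m = card {x\<in>S. \<phi>' x \<notin> \<phi>' ` K}" using Suc.hyps(2) v fin by simp
  obtain \<phi>'' where "recolour_reach E S W m \<phi>' \<phi>''" "\<forall>x\<in>S. \<phi>'' x \<in> \<phi> ` K"
    using Suc.hyps(1)[OF m proper_on_step[OF sym step Suc.prems], folded m, unfolded K'] by blast
  then show ?case unfolding Suc.hyps(2)[symmetric] using reach_step[OF step] by blast
qed

lemma P3_free_reaches_optimal:
  assumes fin: "finite S" and P3: "P3_free_on E S" and sym: "symp E"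
  shows "reaches_optimal E S"
  unfolding reaches_optimal_def
proof (intro allI impI)
  fix \<phi> W assume \<phi>: "proper_on E S W \<phi>"
  have "clique_on E {}" by (simp add: clique_on_def)
  then obtain K where K: "clique_on E K" "K \<subseteq> S"
    and max: "\<And>K'. clique_on E K' \<Longrightarrow> K' \<subseteq> S \<Longrightarrow> card K' \<le> card K"
    using obtain_max_card_subset[OF fin _ empty_subsetI] by blast
  obtain \<phi>' where reach: "recolour_reach E S W (card {v\<in>S. \<phi> v \<notin> \<phi> ` K}) \<phi> \<phi>'"
    and into: "\<forall>x\<in>S. \<phi>' x \<in> \<phi> ` K"
    using P3_free_recolour_into_clique[OF fin P3 sym K(2,1) max \<phi>] by blast
  have reach': "recolour_reach E S W (card S) \<phi> \<phi>'"
    using reach_mono[OF reach] fin by (simp add: card_mono)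
  have "optimal_on E S \<phi>'"
    unfolding optimal_on_def
  proof (intro conjI allI impI)
    show "proper_on E S UNIV \<phi>'" using proper_on_reach[OF reach' sym \<phi>] proper_on_mono by blast
    fix \<psi> assume \<psi>: "proper_on E S UNIV \<psi>"
    have "card (\<phi>' ` S) \<le> card (\<phi> ` K)" using into finite_subset[OF K(2) fin] by (intro card_mono) auto
    also have "\<dots> = card K" using inj_on_clique[OF \<phi> K(2,1)] by (rule card_image)
    also have "\<dots> = card (\<psi> ` K)" using inj_on_clique[OF \<psi> K(2,1)] by (simp add: card_image)
    also have "\<dots> \<le> card (\<psi> ` S)" using K(2) fin by (intro card_mono) auto
    finally show "card (\<phi>' ` S) \<le> card (\<psi> ` S)" .
  qed
  with reach' show "\<exists>\<phi>'. recolour_reach E S W (card S) \<phi> \<phi>' \<and> optimal_on E S \<phi>'" by blast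
qed

lemma reach_separated_union:
  assumes "A \<subseteq> S" and no_edge: "\<And>a b. a \<in> A \<Longrightarrow> b \<in> S - A \<Longrightarrow> \<not> E a b \<and> \<not> E b a"
    and "recolour_reach E A W k \<phi> \<tau>" "recolour_reach E (S - A) W k' (override_on \<phi> \<tau> A) \<tau>"
  shows "recolour_reach E S W (k + k') \<phi> \<tau>"
proof -
  have "recolour_reach E S W k \<phi> (override_on \<phi> \<tau> A)"
    using reach_override_on[OF assms(3,1)] no_edge by blast
  moreover have "recolour_reach E S W k' (override_on \<phi> \<tau> A) (override_on (override_on \<phi> \<tau> A) \<tau> (S - A))"
    using reach_override_on[OF assms(4)] no_edge by blast
  then have "recolour_reach E S W k' (override_on \<phi> \<tau> A) \<tau>"
    by (rule reach_agree_right) (auto simp: override_on_def)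
  ultimately show ?thesis by (rule reach_trans)
qed

text \<open>A \<open>P\<^sub>3\<close>-free graph is a disjoint union of cliques, and on a clique any two proper
  colourings have the same classes.\<close>
lemma P3_free_reach:
  assumes sym: "symp E"
  shows "finite S \<Longrightarrow> P3_free_on E S \<Longrightarrow> proper_on E S W \<phi> \<Longrightarrow> proper_on E S W \<tau> \<Longrightarrow>
    r \<in> W \<Longrightarrow> r \<notin> \<phi> ` S \<Longrightarrow> recolour_reach E S W (2 * card S) \<phi> \<tau>"
proof (induction "card S" arbitrary: S \<phi> rule: less_induct)
  case less
  show ?case
  proof (cases "S = {}")
    case False
    then obtain v where v: "v \<in> S" by blast
    define K where "K = {u\<in>S. u = v \<or> E v u}"
    have KS: "K \<subseteq> S" and finK: "finite K" using less.prems(1) unfolding K_def by auto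
    have no_edge: "\<not> E u w \<and> \<not> E w u" if "u \<in> K" "w \<in> S - K" for u w
      using P3_free_closed_neighbourhood(2)[OF less.prems(2) sym v] that sympD[OF sym]
      unfolding K_def by blast
    have "clique_on E K" unfolding K_def using P3_free_closed_neighbourhood(1)[OF less.prems(2) sym v] .
    then have "same_classes K \<phi> \<tau>"
      using inj_on_clique[OF less.prems(3) KS] inj_on_clique[OF less.prems(4) KS]
      unfolding same_classes_def inj_on_def by blast
    then have "recolour_reach E K W (2 * card K) \<phi> \<tau>"
      using same_classes_reach[OF finK proper_on_mono[OF less.prems(3) KS] proper_on_mono[OF less.prems(4) KS]]
        less.prems(5,6) KS by blast
    moreover have "recolour_reach E (S - K) W (2 * card (S - K)) (override_on \<phi> \<tau> K) \<tau>"
    proof (rule less.hyps)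
      show "card (S - K) < card S" using v less.prems(1) by (auto intro: psubset_card_mono simp: K_def)
      show "proper_on E (S - K) W (override_on \<phi> \<tau> K)"
        using proper_on_mono[OF less.prems(3) Diff_subset] by (rule proper_on_agree) auto
      show "r \<notin> override_on \<phi> \<tau> K ` (S - K)" using less.prems(6) by auto
      show "finite (S - K)" using less.prems(1) by simp
      show "P3_free_on E (S - K)" using P3_free_on_subset[OF less.prems(2) Diff_subset] .
      show "proper_on E (S - K) W \<tau>" using proper_on_mono[OF less.prems(4) Diff_subset] by simp
    qed (use less.prems(5) in simp)
    ultimately have "recolour_reach E S W (2 * card K + 2 * card (S - K)) \<phi> \<tau>"
      using reach_separated_union[where E = E, OF KS no_edge] by blast
    moreover have "card S = card K + card (S - K)"
      using KS finK less.prems(1) by (simp add: card_Diff_subset card_mono)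
    ultimately show ?thesis by (simp add: algebra_simps)
  qed (auto intro: reach_agree)
qed

lemma P3_free_aligns_optimal:
  assumes fin: "finite S" and P3: "P3_free_on E S" and sym: "symp E"
  shows "aligns_optimal E S"
  unfolding aligns_optimal_def
proof (intro allI impI)
  fix \<phi> \<psi> W assume opt: "optimal_on E S \<phi>" "optimal_on E S \<psi>" and W: "\<phi> ` S \<subseteq> W"
    and "\<exists>r\<in>W. r \<notin> \<phi> ` S"
  then obtain r where r: "r \<in> W" "r \<notin> \<phi> ` S" by blast
  obtain \<sigma> where \<sigma>: "bij_betw \<sigma> (\<psi> ` S) (\<phi> ` S)"
    using optimal_on_card_eq[OF opt(2,1)] fin finite_same_card_bij by blast
  define \<tau> where "\<tau> = \<sigma> \<circ> \<psi>"
  have inj: "inj_on \<sigma> (\<psi> ` S)" and "\<sigma> ` \<psi> ` S = \<phi> ` S"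
    using \<sigma> unfolding bij_betw_def by auto
  then have "\<tau> x \<in> W" if "x \<in> S" for x using W that unfolding \<tau>_def by auto
  moreover have "\<psi> x \<noteq> \<psi> y" if "x \<in> S" "y \<in> S" "E x y" for x y
    using opt(2) that unfolding optimal_on_def proper_on_def by blast
  moreover have same: "\<tau> x = \<tau> y \<longleftrightarrow> \<psi> x = \<psi> y" if "x \<in> S" "y \<in> S" for x y
    using inj_on_eq_iff[OF inj] that unfolding \<tau>_def by simp
  ultimately have \<tau>: "proper_on E S W \<tau>" "same_classes S \<tau> \<psi>"
    unfolding proper_on_def same_classes_def by auto
  have "recolour_reach E S W (2 * card S) \<phi> \<tau>"
    using P3_free_reach[OF sym fin P3 optimal_on_proper_on[OF opt(1) W] \<tau>(1) r] .
  with \<tau>(2) show "\<exists>\<phi>'. recolour_reach E S W (2 * card S) \<phi> \<phi>' \<and> same_classes S \<phi>' \<psi>" by blast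
qed

section \<open>Graphs without independent triples\<close>

definition has_independent_triple :: "('a \<Rightarrow> 'a \<Rightarrow> bool) \<Rightarrow> 'a set \<Rightarrow> bool" where
  "has_independent_triple E S \<longleftrightarrow> (\<exists>a\<in>S. \<exists>b\<in>S. \<exists>c\<in>S. a \<noteq> b \<and> a \<noteq> c \<and> b \<noteq> c
     \<and> \<not> E a b \<and> \<not> E a c \<and> \<not> E b c)"

definition disagreeing_pairs :: "'a set \<Rightarrow> ('a \<Rightarrow> nat) \<Rightarrow> ('a \<Rightarrow> nat) \<Rightarrow> ('a \<times> 'a) set" where
  "disagreeing_pairs S \<phi> \<psi> = {(x, y). x \<in> S \<and> y \<in> S \<and> x \<noteq> y \<and> (\<phi> x = \<phi> y) \<noteq> (\<psi> x = \<psi> y)}"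

definition same_colour_pairs :: "'a set \<Rightarrow> ('a \<Rightarrow> nat) \<Rightarrow> ('a \<times> 'a) set" where
  "same_colour_pairs S \<phi> = {(x, y). x \<in> S \<and> y \<in> S \<and> x \<noteq> y \<and> \<phi> x = \<phi> y}"

definition non_singleton :: "'a set \<Rightarrow> ('a \<Rightarrow> nat) \<Rightarrow> 'a set" where
  "non_singleton S \<phi> = {x\<in>S. \<exists>y\<in>S. y \<noteq> x \<and> \<phi> y = \<phi> x}"

definition no_mergeable_pair :: "'a set \<Rightarrow> ('a \<Rightarrow> nat) \<Rightarrow> ('a \<Rightarrow> nat) \<Rightarrow> bool" where
  "no_mergeable_pair S \<phi> \<psi> \<longleftrightarrow>
     (\<forall>u\<in>S. \<forall>t\<in>S. u \<noteq> t \<and> \<psi> u = \<psi> t \<and> \<phi> u \<noteq> \<phi> t \<longrightarrow> u \<in> non_singleton S \<phi>)"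

lemma finite_disagreeing_pairs: "finite S \<Longrightarrow> finite (disagreeing_pairs S \<phi> \<psi>)"
  by (rule finite_subset[of _ "S \<times> S"]) (auto simp: disagreeing_pairs_def)

lemma finite_same_colour_pairs: "finite S \<Longrightarrow> finite (same_colour_pairs S \<phi>)"
  by (rule finite_subset[of _ "S \<times> S"]) (auto simp: same_colour_pairs_def)

text \<open>Recolouring \<open>t\<close> with \<open>c\<close> settles the disagreement of the pair \<open>{t, u}\<close> and creates no new
  disagreement involving \<open>t\<close>.\<close>
lemma card_disagreeing_pairs_update:
  assumes "finite S" "t \<in> S" "u \<in> S" "t \<noteq> u"
    and "(c = \<phi> u) = (\<psi> t = \<psi> u)" "(\<phi> t = \<phi> u) \<noteq> (\<psi> t = \<psi> u)"
    and "\<And>y. y \<in> S \<Longrightarrow> y \<noteq> t \<Longrightarrow> y \<noteq> u \<Longrightarrow>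
      (c = \<phi> y) = (\<psi> t = \<psi> y) \<or> (c = \<phi> y) = (\<phi> t = \<phi> y)"
  shows "card (disagreeing_pairs S (\<phi>(t := c)) \<psi>) + 2 \<le> card (disagreeing_pairs S \<phi> \<psi>)"
proof -
  let ?D = "disagreeing_pairs S \<phi> \<psi>"
  have other: "y \<noteq> u \<and> (\<phi> t = \<phi> y) \<noteq> (\<psi> t = \<psi> y)"
    if "y \<in> S" "y \<noteq> t" "(c = \<phi> y) \<noteq> (\<psi> t = \<psi> y)" for y
  proof -
    have "y \<noteq> u" using that(3) assms(5) by auto
    then show ?thesis using assms(7)[OF that(1,2)] that(3) by auto
  qed
  have "disagreeing_pairs S (\<phi>(t := c)) \<psi> \<subseteq> ?D - {(t, u), (u, t)}"
  proof
    fix p assume "p \<in> disagreeing_pairs S (\<phi>(t := c)) \<psi>"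
    then obtain x y where p: "p = (x, y)" "x \<in> S" "y \<in> S" "x \<noteq> y"
      and dis: "((\<phi>(t := c)) x = (\<phi>(t := c)) y) \<noteq> (\<psi> x = \<psi> y)"
      unfolding disagreeing_pairs_def by blast
    consider "x = t" | "y = t" | "x \<noteq> t" "y \<noteq> t" by blast
    then show "p \<in> ?D - {(t, u), (u, t)}"
    proof cases
      case 1
      then have "(c = \<phi> y) \<noteq> (\<psi> t = \<psi> y)" using dis p(4) by auto
      then have "y \<noteq> u \<and> (\<phi> t = \<phi> y) \<noteq> (\<psi> t = \<psi> y)" using other[OF p(3)] 1 p(4) by blast
      with 1 p assms(4) show ?thesis unfolding disagreeing_pairs_def by auto
    next
      case 2
      then have "(c = \<phi> x) \<noteq> (\<psi> t = \<psi> x)" using dis p(4) by auto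
      then have "x \<noteq> u \<and> (\<phi> t = \<phi> x) \<noteq> (\<psi> t = \<psi> x)" using other[OF p(2)] 2 p(4) by blast
      with 2 p show ?thesis unfolding disagreeing_pairs_def by auto
    qed (use p dis in \<open>auto simp: disagreeing_pairs_def\<close>)
  qed
  then have "card (disagreeing_pairs S (\<phi>(t := c)) \<psi>) \<le> card (?D - {(t, u), (u, t)})"
    using finite_disagreeing_pairs[OF assms(1)] by (intro card_mono) auto
  moreover have pair: "{(t, u), (u, t)} \<subseteq> ?D" "card {(t, u), (u, t)} = 2"
    using assms(2-4,6) unfolding disagreeing_pairs_def by auto
  then have "card (?D - {(t, u), (u, t)}) = card ?D - 2" "2 \<le> card ?D"
    using card_Diff_subset card_mono finite_disagreeing_pairs[OF assms(1)] by (metis finite.emptyI finite.insertI)+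
  ultimately show ?thesis by linarith
qed

locale no_independent_triple =
  fixes E :: "'a \<Rightarrow> 'a \<Rightarrow> bool" and S :: "'a set"
  assumes finite: "finite S" and no_triple: "\<not> has_independent_triple E S" and symp: "symp E"
begin

lemma no_colour_triple:
  assumes "proper_on E S W \<phi>" "x \<in> S" "y \<in> S" "z \<in> S" "x \<noteq> y" "x \<noteq> z" "y \<noteq> z"
    "\<phi> x = \<phi> y" "\<phi> x = \<phi> z"
  shows False
proof -
  have "\<not> E a b" if "a \<in> S" "b \<in> S" "\<phi> a = \<phi> b" for a b
    using assms(1) that unfolding proper_on_def by blast
  then have "\<not> E x y" "\<not> E x z" "\<not> E y z" using assms(2-4,8,9) by auto
  then show False using no_triple assms(2-7) unfolding has_independent_triple_def by blast
qed

lemma card_same_colour_pairs: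
  assumes "proper_on E S W \<phi>"
  shows "card (same_colour_pairs S \<phi>) \<le> card S"
proof -
  define mate where "mate x = (SOME y. y \<in> S \<and> y \<noteq> x \<and> \<phi> y = \<phi> x)" for x
  have "same_colour_pairs S \<phi> \<subseteq> (\<lambda>x. (x, mate x)) ` S"
  proof
    fix p assume "p \<in> same_colour_pairs S \<phi>"
    then obtain x y where xy: "p = (x, y)" "x \<in> S" "y \<in> S" "x \<noteq> y" "\<phi> x = \<phi> y"
      unfolding same_colour_pairs_def by auto
    have mate: "mate x \<in> S" "mate x \<noteq> x" "\<phi> x = \<phi> (mate x)"
      using someI[of "\<lambda>z. z \<in> S \<and> z \<noteq> x \<and> \<phi> z = \<phi> x" y] xy unfolding mate_def by auto
    have "mate x = y"
    proof (rule ccontr)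
      assume "mate x \<noteq> y"
      then show False using no_colour_triple[OF assms xy(2,3) mate(1) xy(4) mate(2)[symmetric] _ xy(5) mate(3)] by blast
    qed
    then show "p \<in> (\<lambda>x. (x, mate x)) ` S" using xy by auto
  qed
  then have "card (same_colour_pairs S \<phi>) \<le> card ((\<lambda>x. (x, mate x)) ` S)"
    using finite by (intro card_mono) auto
  also have "\<dots> \<le> card S" using card_image_le finite by blast
  finally show ?thesis .
qed

lemma card_disagreeing_pairs:
  assumes "proper_on E S W \<phi>" "proper_on E S W' \<psi>"
  shows "card (disagreeing_pairs S \<phi> \<psi>) \<le> 2 * card S"
proof -
  have "disagreeing_pairs S \<phi> \<psi> \<subseteq> same_colour_pairs S \<phi> \<union> same_colour_pairs S \<psi>"
    unfolding disagreeing_pairs_def same_colour_pairs_def by auto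
  then have "card (disagreeing_pairs S \<phi> \<psi>) \<le> card (same_colour_pairs S \<phi> \<union> same_colour_pairs S \<psi>)"
    using finite by (intro card_mono) (auto intro: finite_same_colour_pairs)
  also have "\<dots> \<le> card (same_colour_pairs S \<phi>) + card (same_colour_pairs S \<psi>)"
    by (rule card_Un_le)
  finally show ?thesis
    using card_same_colour_pairs[OF assms(1)] card_same_colour_pairs[OF assms(2)] by simp
qed

lemma card_non_singleton_class:
  assumes \<phi>: "proper_on E S W \<phi>" and c: "c \<in> \<phi> ` non_singleton S \<phi>"
  shows "card {x\<in>non_singleton S \<phi>. \<phi> x = c} = 2"
proof -
  let ?M = "non_singleton S \<phi>"
  have MS: "?M \<subseteq> S" unfolding non_singleton_def by auto
  obtain m m' where m: "m \<in> ?M" "\<phi> m = c" "m' \<in> S" "m' \<noteq> m" "\<phi> m' = \<phi> m"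
    using c unfolding non_singleton_def by auto
  then have "m' \<in> ?M" unfolding non_singleton_def using MS by auto
  have "{x\<in>?M. \<phi> x = c} = {m, m'}"
  proof
    show "{m, m'} \<subseteq> {x\<in>?M. \<phi> x = c}" using m \<open>m' \<in> ?M\<close> by auto
    show "{x\<in>?M. \<phi> x = c} \<subseteq> {m, m'}"
    proof
      fix x assume x: "x \<in> {x\<in>?M. \<phi> x = c}"
      show "x \<in> {m, m'}"
      proof (rule ccontr)
        assume "x \<notin> {m, m'}"
        then show False using no_colour_triple[OF \<phi>, of m m' x] m x MS by auto
      qed
    qed
  qed
  then show ?thesis using m(4) by auto
qed

lemma card_image_non_singleton:
  assumes \<phi>: "proper_on E S W \<phi>"
  shows "2 * card (\<phi> ` S) + card (non_singleton S \<phi>) = 2 * card S"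
proof -
  let ?M = "non_singleton S \<phi>"
  define U where "U = S - ?M"
  have MS: "?M \<subseteq> S" unfolding non_singleton_def by auto
  have finM: "finite ?M" and finU: "finite U" using finite MS finite_subset unfolding U_def by auto
  have S: "S = U \<union> ?M" "U \<inter> ?M = {}" unfolding U_def using MS by auto
  have "inj_on \<phi> U" unfolding inj_on_def U_def non_singleton_def by auto
  moreover have "\<phi> u \<noteq> \<phi> m" if "u \<in> U" "m \<in> ?M" for u m
  proof
    assume "\<phi> u = \<phi> m"
    moreover have "m \<noteq> u" "m \<in> S" using that MS unfolding U_def by auto
    ultimately have "u \<in> ?M" using that(1) unfolding U_def non_singleton_def by auto
    then show False using that(1) unfolding U_def by blast
  qed
  then have "\<phi> ` U \<inter> \<phi> ` ?M = {}" by blast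
  ultimately have images: "card (\<phi> ` S) = card U + card (\<phi> ` ?M)"
    using S finU finM by (metis card_Un_disjoint card_image finite_imageI image_Un)
  have "card ?M = 2 * card (\<phi> ` ?M)"
    using card_eq_sum sum.image_gen[OF finM, of "\<lambda>_. 1 :: nat" \<phi>] card_non_singleton_class[OF \<phi>]
    by simp
  moreover have "card S = card U + card ?M" using S finU finM by (metis card_Un_disjoint)
  ultimately show ?thesis using images by simp
qed

lemma card_image_no_mergeable_pair:
  assumes "proper_on E S W \<phi>" "proper_on E S W' \<psi>" "no_mergeable_pair S \<phi> \<psi>"
  shows "card (\<phi> ` S) \<le> card (\<psi> ` S)"
proof -
  have "non_singleton S \<psi> \<subseteq> non_singleton S \<phi>"
    using assms(3) unfolding no_mergeable_pair_def non_singleton_def by fastforce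
  then have "card (non_singleton S \<psi>) \<le> card (non_singleton S \<phi>)"
    using finite by (intro card_mono) (auto simp: non_singleton_def)
  then show ?thesis
    using card_image_non_singleton[OF assms(1)] card_image_non_singleton[OF assms(2)] by simp
qed

text \<open>Repeatedly move a vertex \<open>t\<close> onto the colour of a singleton class \<open>{u}\<close> with
  \<open>\<psi> u = \<psi> t\<close>. Each move removes at least two disagreeing pairs.\<close>
lemma reach_no_mergeable_pair:
  assumes \<psi>: "proper_on E S UNIV \<psi>"
  shows "proper_on E S W \<phi> \<Longrightarrow> \<exists>\<phi>' k. recolour_reach E S W k \<phi> \<phi>' \<and> proper_on E S W \<phi>'
     \<and> no_mergeable_pair S \<phi>' \<psi>
     \<and> 2 * k + card (disagreeing_pairs S \<phi>' \<psi>) \<le> card (disagreeing_pairs S \<phi> \<psi>)"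
proof (induction "card (disagreeing_pairs S \<phi> \<psi>)" arbitrary: \<phi> rule: less_induct)
  case less
  show ?case
  proof (cases "no_mergeable_pair S \<phi> \<psi>")
    case True
    then show ?thesis using less.prems reach_refl by fastforce
  next
    case False
    then obtain u t where ut: "u \<in> S" "t \<in> S" "u \<noteq> t" "\<psi> u = \<psi> t" "\<phi> u \<noteq> \<phi> t"
      and single: "\<forall>y\<in>S. y \<noteq> u \<longrightarrow> \<phi> y \<noteq> \<phi> u"
      unfolding no_mergeable_pair_def non_singleton_def by blast
    define \<phi>' where "\<phi>' = \<phi>(t := \<phi> u)"
    have "\<not> E t u" using \<psi> ut unfolding proper_on_def by metis
    then have step: "recolour_step E S W \<phi> \<phi>'"
      using ut single less.prems unfolding recolour_step_def proper_on_def \<phi>'_def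
      by (intro bexI[of _ t] bexI[of _ "\<phi> u"]) auto
    have "\<psi> t \<noteq> \<psi> y" if "y \<in> S" "y \<noteq> t" "y \<noteq> u" for y
      using no_colour_triple[OF \<psi> ut(2,1) that(1)] ut that by metis
    then have fewer: "card (disagreeing_pairs S \<phi>' \<psi>) + 2 \<le> card (disagreeing_pairs S \<phi> \<psi>)"
      unfolding \<phi>'_def using ut single
      by (intro card_disagreeing_pairs_update[OF finite ut(2,1) ut(3)[symmetric]]) auto
    then obtain \<phi>'' k where "recolour_reach E S W k \<phi>' \<phi>''" "proper_on E S W \<phi>''"
      "no_mergeable_pair S \<phi>'' \<psi>"
      "2 * k + card (disagreeing_pairs S \<phi>'' \<psi>) \<le> card (disagreeing_pairs S \<phi>' \<psi>)"
      using less.hyps[OF _ proper_on_step[OF symp step less.prems]] by fastforce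
    with fewer show ?thesis
      by (intro exI[of _ \<phi>''] exI[of _ "Suc k"]) (auto intro: reach_step[OF step])
  qed
qed

lemma reaches_optimal: "reaches_optimal E S"
  unfolding reaches_optimal_def
proof (intro allI impI)
  fix \<phi> W assume \<phi>: "proper_on E S W \<phi>"
  obtain \<gamma> where \<gamma>: "proper_on E S UNIV \<gamma>"
    and min: "\<And>\<psi>. proper_on E S UNIV \<psi> \<Longrightarrow> card (\<gamma> ` S) \<le> card (\<psi> ` S)"
    using ex_has_least_nat[of "proper_on E S UNIV" \<phi> "\<lambda>\<psi>. card (\<psi> ` S)"] \<phi> proper_on_mono by blast
  obtain \<phi>' k where reach: "recolour_reach E S W k \<phi> \<phi>'" and \<phi>': "proper_on E S W \<phi>'"
    and "no_mergeable_pair S \<phi>' \<gamma>"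
    and "2 * k + card (disagreeing_pairs S \<phi>' \<gamma>) \<le> card (disagreeing_pairs S \<phi> \<gamma>)"
    using reach_no_mergeable_pair[OF \<gamma> \<phi>] by blast
  then have "k \<le> card S" and "card (\<phi>' ` S) \<le> card (\<gamma> ` S)"
    using card_disagreeing_pairs[OF \<phi> \<gamma>] card_image_no_mergeable_pair[OF \<phi>' \<gamma>] by simp_all
  then have "recolour_reach E S W (card S) \<phi> \<phi>'" and "optimal_on E S \<phi>'"
    using reach_mono[OF reach] \<phi>' proper_on_mono min unfolding optimal_on_def
    by (blast, meson order_trans subset_UNIV order_refl)
  then show "\<exists>\<phi>'. recolour_reach E S W (card S) \<phi> \<phi>' \<and> optimal_on E S \<phi>'" by blast
qed

text \<open>Once no pair can be merged, a remaining disagreement is a pair \<open>{x, y}\<close> coloured alike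
  by \<open>\<phi>\<close> but not by \<open>\<psi>\<close>; recolouring \<open>x\<close> with an unused colour separates it.\<close>
lemma separate_pair:
  assumes \<phi>: "proper_on E S W \<phi>" and \<psi>: "proper_on E S UNIV \<psi>" and no_merge: "no_mergeable_pair S \<phi> \<psi>"
    and "disagreeing_pairs S \<phi> \<psi> \<noteq> {}" and f: "f \<in> W" "f \<notin> \<phi> ` S"
  obtains \<phi>' where "recolour_step E S W \<phi> \<phi>'"
    "card (disagreeing_pairs S \<phi>' \<psi>) + 2 \<le> card (disagreeing_pairs S \<phi> \<psi>)"
proof -
  obtain a b where ab: "a \<in> S" "b \<in> S" "a \<noteq> b" "(\<phi> a = \<phi> b) \<noteq> (\<psi> a = \<psi> b)"
    using assms(4) unfolding disagreeing_pairs_def by auto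
  obtain x y where xy: "x \<in> S" "y \<in> S" "x \<noteq> y" "\<phi> x = \<phi> y" "\<psi> x \<noteq> \<psi> y"
  proof (cases "\<phi> a = \<phi> b")
    case False
    then obtain a' where a': "a' \<in> S" "a' \<noteq> a" "\<phi> a' = \<phi> a"
      using no_merge ab unfolding no_mergeable_pair_def non_singleton_def by auto
    then have "\<psi> a' \<noteq> \<psi> a" using no_colour_triple[OF \<psi> ab(1,2) a'(1)] ab False by metis
    then show ?thesis using that a' ab(1) by metis
  qed (use that ab in blast)
  have "recolour_step E S W \<phi> (\<phi>(x := f))"
    unfolding recolour_step_def using xy f
    by (intro bexI[of _ x] bexI[of _ f]) (auto simp: image_iff)
  moreover have "\<phi> x \<noteq> \<phi> z" if "z \<in> S" "z \<noteq> x" "z \<noteq> y" for z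
    using no_colour_triple[OF \<phi> xy(1,2) that(1)] xy that by metis
  then have "card (disagreeing_pairs S (\<phi>(x := f)) \<psi>) + 2 \<le> card (disagreeing_pairs S \<phi> \<psi>)"
    using xy f by (intro card_disagreeing_pairs_update[OF finite xy(1,2,3)]) (auto simp: image_iff)
  ultimately show ?thesis using that by blast
qed

lemma reach_same_classes:
  assumes \<psi>: "proper_on E S UNIV \<psi>"
    and unused: "\<And>\<phi>. proper_on E S W \<phi> \<Longrightarrow> card (\<phi> ` S) \<le> card (\<psi> ` S) \<Longrightarrow> \<exists>f\<in>W. f \<notin> \<phi> ` S"
  shows "proper_on E S W \<phi> \<Longrightarrow>
    \<exists>\<phi>'. recolour_reach E S W (card (disagreeing_pairs S \<phi> \<psi>)) \<phi> \<phi>' \<and> same_classes S \<phi>' \<psi>"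
proof (induction "card (disagreeing_pairs S \<phi> \<psi>)" arbitrary: \<phi> rule: less_induct)
  case less
  obtain \<phi>\<^sub>1 k where reach\<^sub>1: "recolour_reach E S W k \<phi> \<phi>\<^sub>1" and \<phi>\<^sub>1: "proper_on E S W \<phi>\<^sub>1"
    and no_merge: "no_mergeable_pair S \<phi>\<^sub>1 \<psi>"
    and fewer\<^sub>1: "2 * k + card (disagreeing_pairs S \<phi>\<^sub>1 \<psi>) \<le> card (disagreeing_pairs S \<phi> \<psi>)"
    using reach_no_mergeable_pair[OF \<psi> less.prems] by blast
  show ?case
  proof (cases "disagreeing_pairs S \<phi>\<^sub>1 \<psi> = {}")
    case True
    then have "same_classes S \<phi>\<^sub>1 \<psi>" unfolding same_classes_def disagreeing_pairs_def by auto
    moreover have "recolour_reach E S W (card (disagreeing_pairs S \<phi> \<psi>)) \<phi> \<phi>\<^sub>1"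
      using reach_mono[OF reach\<^sub>1] fewer\<^sub>1 by simp
    ultimately show ?thesis by blast
  next
    case False
    obtain f where "f \<in> W" "f \<notin> \<phi>\<^sub>1 ` S"
      using unused[OF \<phi>\<^sub>1 card_image_no_mergeable_pair[OF \<phi>\<^sub>1 \<psi> no_merge]] by blast
    then obtain \<phi>\<^sub>2 where step: "recolour_step E S W \<phi>\<^sub>1 \<phi>\<^sub>2"
      and fewer\<^sub>2: "card (disagreeing_pairs S \<phi>\<^sub>2 \<psi>) + 2 \<le> card (disagreeing_pairs S \<phi>\<^sub>1 \<psi>)"
      using separate_pair[OF \<phi>\<^sub>1 \<psi> no_merge False] by blast
    obtain \<phi>' where "recolour_reach E S W (card (disagreeing_pairs S \<phi>\<^sub>2 \<psi>)) \<phi>\<^sub>2 \<phi>'"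
      and "same_classes S \<phi>' \<psi>"
      using less.hyps[OF _ proper_on_step[OF symp step \<phi>\<^sub>1]] fewer\<^sub>1 fewer\<^sub>2 by fastforce
    moreover from this have "recolour_reach E S W (k + (1 + card (disagreeing_pairs S \<phi>\<^sub>2 \<psi>))) \<phi> \<phi>'"
      using reach_trans[OF reach\<^sub>1 reach_trans[OF reach_single[OF step]]] by blast
    moreover have "k + (1 + card (disagreeing_pairs S \<phi>\<^sub>2 \<psi>)) \<le> card (disagreeing_pairs S \<phi> \<psi>)"
      using fewer\<^sub>1 fewer\<^sub>2 by linarith
    ultimately show ?thesis using reach_mono by blast
  qed
qed

lemma aligns_optimal: "aligns_optimal E S"
  unfolding aligns_optimal_def
proof (intro allI impI)
  fix \<phi> \<psi> W assume opt: "optimal_on E S \<phi>" "optimal_on E S \<psi>" and W: "\<phi> ` S \<subseteq> W"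
    and "\<exists>r\<in>W. r \<notin> \<phi> ` S"
  then obtain r where r: "r \<in> W" "r \<notin> \<phi> ` S" by blast
  have \<psi>: "proper_on E S UNIV \<psi>" using opt(2) unfolding optimal_on_def by blast
  have \<phi>: "proper_on E S W \<phi>" using optimal_on_proper_on[OF opt(1) W] .
  have "\<exists>f\<in>W. f \<notin> \<phi>' ` S" if "card (\<phi>' ` S) \<le> card (\<psi> ` S)" for \<phi>'
    using unused_colour[OF finite _ W r] that optimal_on_card_eq[OF opt] by simp
  then obtain \<phi>' where "recolour_reach E S W (card (disagreeing_pairs S \<phi> \<psi>)) \<phi> \<phi>'"
    and "same_classes S \<phi>' \<psi>"
    using reach_same_classes[OF \<psi> _ \<phi>] by blast
  moreover have "card (disagreeing_pairs S \<phi> \<psi>) \<le> 2 * card S"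
    using card_disagreeing_pairs[OF \<phi> \<psi>] .
  ultimately show "\<exists>\<phi>'. recolour_reach E S W (2 * card S) \<phi> \<phi>' \<and> same_classes S \<phi>' \<psi>"
    using reach_mono by blast
qed

end

section \<open>The structure of \<open>(P\<^sub>3 + P\<^sub>1)\<close>-free graphs\<close>

lemma simple_graphD:
  assumes "simple_graph V E"
  shows "finite V" "symp E" "\<And>v. \<not> E v v" "\<And>u v. E u v \<Longrightarrow> u \<in> V \<and> v \<in> V"
  using assms unfolding simple_graph_def symp_def by blast+

lemma P3P1_freeD:
  assumes free: "P3P1_free V E" and graph: "simple_graph V E"
    and V: "p\<^sub>0 \<in> V" "p\<^sub>1 \<in> V" "p\<^sub>2 \<in> V" "p\<^sub>3 \<in> V"
    and path: "E p\<^sub>0 p\<^sub>1" "E p\<^sub>1 p\<^sub>2" "p\<^sub>0 \<noteq> p\<^sub>2" "\<not> E p\<^sub>0 p\<^sub>2"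
    and isolated: "\<not> E p\<^sub>0 p\<^sub>3" "\<not> E p\<^sub>1 p\<^sub>3" "\<not> E p\<^sub>2 p\<^sub>3"
  shows False
proof -
  note E = simple_graphD(2,3)[OF graph]
  define f where "f i = (if i = 0 then p\<^sub>0 else if i = 1 then p\<^sub>1 else if i = 2 then p\<^sub>2 else p\<^sub>3)"
    for i :: nat
  have "p\<^sub>0 \<noteq> p\<^sub>1" "p\<^sub>1 \<noteq> p\<^sub>2" "p\<^sub>0 \<noteq> p\<^sub>3" "p\<^sub>1 \<noteq> p\<^sub>3" "p\<^sub>2 \<noteq> p\<^sub>3"
    using path isolated E by (auto dest: sympD)
  moreover have range: "{0..3 :: nat} = {0, 1, 2, 3}" by auto
  ultimately have "inj_on f {0..3}" "f ` {0..3} \<subseteq> V"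
    using V path(3) unfolding f_def inj_on_def range by auto
  moreover have "\<forall>i\<in>{0..3}. \<forall>j\<in>{0..3}. E (f i) (f j) \<longleftrightarrow> P3P1_edge i j"
  proof -
    have edge: "P3P1_edge i j \<longleftrightarrow> (i = 0 \<and> j = 1) \<or> (i = 1 \<and> j = 0) \<or> (i = 1 \<and> j = 2) \<or> (i = 2 \<and> j = 1)"
      for i j :: nat
      unfolding P3P1_edge_def doubleton_eq_iff by auto
    have "E p\<^sub>1 p\<^sub>0" "E p\<^sub>2 p\<^sub>1" "\<not> E p\<^sub>2 p\<^sub>0" "\<not> E p\<^sub>3 p\<^sub>0" "\<not> E p\<^sub>3 p\<^sub>1" "\<not> E p\<^sub>3 p\<^sub>2"
      using path isolated sympD[OF E(1)] by blast+
    then show ?thesis unfolding range by (simp add: edge f_def path isolated E(2))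
  qed
  ultimately show False using free unfolding P3P1_free_def has_induced_P3P1_def by blast
qed

text \<open>Let \<open>I\<close> be a maximal independent set with at least three vertices in a
  \<open>(P\<^sub>3 + P\<^sub>1)\<close>-free graph. Every vertex outside \<open>I\<close> that is not adjacent to all of \<open>I\<close>
  has exactly one neighbour in \<open>I\<close>; grouping the vertices by this neighbour gives cliques
  without edges between them.\<close>
locale P3P1_free_max_independent =
  fixes V :: "'a set" and E :: "'a \<Rightarrow> 'a \<Rightarrow> bool" and S I :: "'a set"
  assumes graph: "simple_graph V E" and free: "P3P1_free V E" and S: "S \<subseteq> V"
    and I: "I \<subseteq> S" "\<And>x y. x \<in> I \<Longrightarrow> y \<in> I \<Longrightarrow> \<not> E x y"
    and maximal: "\<And>z. z \<in> S \<Longrightarrow> z \<notin> I \<Longrightarrow> \<exists>a\<in>I. E z a"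
    and three: "\<And>a b. \<exists>c\<in>I. c \<noteq> a \<and> c \<noteq> b"
begin

definition hub :: "'a set" where
  "hub = {x\<in>S - I. \<forall>a\<in>I. E x a}"

definition attached :: "'a \<Rightarrow> 'a \<Rightarrow> bool" where
  "attached u a \<longleftrightarrow> a \<in> I \<and> (u = a \<or> (u \<notin> I \<and> E u a))"

lemma symp: "symp E" and irrefl: "\<not> E v v"
  using simple_graphD[OF graph] by auto

lemma no_P3P1:
  assumes "p\<^sub>0 \<in> S" "p\<^sub>1 \<in> S" "p\<^sub>2 \<in> S" "p\<^sub>3 \<in> S" "E p\<^sub>0 p\<^sub>1" "E p\<^sub>1 p\<^sub>2" "p\<^sub>0 \<noteq> p\<^sub>2" "\<not> E p\<^sub>0 p\<^sub>2"
    "\<not> E p\<^sub>0 p\<^sub>3" "\<not> E p\<^sub>1 p\<^sub>3" "\<not> E p\<^sub>2 p\<^sub>3"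
  shows False
  using P3P1_freeD[OF free graph] assms S by blast

lemma two_neighbours_imp_hub:
  assumes "z \<in> S" "z \<notin> I" "a \<in> I" "b \<in> I" "a \<noteq> b" "E z a" "E z b"
  shows "z \<in> hub"
  unfolding hub_def
proof (intro CollectI conjI ballI)
  fix c assume "c \<in> I"
  show "E z c"
  proof (rule ccontr)
    assume "\<not> E z c"
    moreover have "c \<noteq> a" "c \<noteq> b" using \<open>\<not> E z c\<close> assms by auto
    ultimately show False
      using no_P3P1[of a z b c] assms I \<open>c \<in> I\<close> symp by (blast dest: sympD)
  qed
qed (use assms in auto)

lemma attached_exists: "u \<in> S - hub \<Longrightarrow> \<exists>a. attached u a"
  using maximal unfolding attached_def by (cases "u \<in> I") auto

lemma attached_unique: "u \<in> S - hub \<Longrightarrow> attached u a \<Longrightarrow> attached u b \<Longrightarrow> a = b"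
  using two_neighbours_imp_hub I(2) unfolding attached_def by blast

lemma attached_same_adjacent:
  assumes "u \<in> S - hub" "v \<in> S - hub" "u \<noteq> v" "attached u a" "attached v a"
  shows "E u v"
proof (cases "u \<in> I \<or> v \<in> I")
  case True
  then show ?thesis using assms I(2) symp unfolding attached_def by (blast dest: sympD)
next
  case False
  then have a: "E u a" "E v a" "a \<in> I" using assms unfolding attached_def by auto
  obtain b where b: "b \<in> I" "b \<noteq> a" using three by blast
  have "\<not> E u b" "\<not> E v b"
    using attached_unique[OF assms(1,4)] attached_unique[OF assms(2,5)] b False
    unfolding attached_def by auto
  show ?thesis
  proof (rule ccontr)
    assume "\<not> E u v"
    then show False
      using no_P3P1[of u a v b] a b assms(1-3) \<open>\<not> E u b\<close> \<open>\<not> E v b\<close> I symp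
      by (auto dest: sympD)
  qed
qed

lemma adjacent_attached_eq:
  assumes "u \<in> S - hub" "v \<in> S - hub" "E u v" "attached u a" "attached v b"
  shows "a = b"
proof (rule ccontr)
  assume "a \<noteq> b"
  consider "u \<in> I" | "v \<in> I" | "u \<notin> I" "v \<notin> I" by blast
  then show False
  proof cases
    case 1
    then have "attached v u" using assms(3) I(2) symp unfolding attached_def by (blast dest: sympD)
    then show False using attached_unique[OF assms(2,5)] assms(4) 1 \<open>a \<noteq> b\<close> I(2)
      unfolding attached_def by auto
  next
    case 2
    then have "attached u v" using assms(3) I(2) unfolding attached_def by blast
    then show False using attached_unique[OF assms(1,4)] assms(5) 2 \<open>a \<noteq> b\<close> I(2)
      unfolding attached_def by auto
  next
    case 3
    then have ab: "E u a" "E v b" "a \<in> I" "b \<in> I" using assms(4,5) unfolding attached_def by auto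
    obtain c where c: "c \<in> I" "c \<noteq> a" "c \<noteq> b" using three by blast
    have "\<not> E v a" "\<not> E u c" "\<not> E v c"
      using attached_unique[OF assms(2,5)] attached_unique[OF assms(1,4)] 3 ab c \<open>a \<noteq> b\<close>
      unfolding attached_def by blast+
    moreover have "u \<noteq> v" using assms(3) irrefl by auto
    ultimately show False
      using no_P3P1[of a u v c] ab c assms(1,2,3) 3 I symp by (auto dest: sympD)
  qed
qed

lemma P3_free_on_rest: "P3_free_on E (S - hub)"
  unfolding P3_free_on_def
proof (intro ballI impI)
  fix u v w assume uvw: "u \<in> S - hub" "v \<in> S - hub" "w \<in> S - hub" "E u v" "E v w" "u \<noteq> w"
  obtain a b c where "attached u a" "attached v b" "attached w c"
    using attached_exists uvw(1-3) by blast
  moreover from this have "a = b" "b = c" using adjacent_attached_eq uvw by blast+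
  ultimately show "E u w" using attached_same_adjacent uvw by blast
qed

lemma hub_complete:
  assumes x: "x \<in> hub" and q: "q \<in> S - hub"
  shows "E x q"
proof (cases "q \<in> I")
  case True
  then show ?thesis using x unfolding hub_def by auto
next
  case False
  obtain a where a: "a \<in> I" "E q a" using maximal q False by blast
  obtain b where b: "b \<in> I" "b \<noteq> a" using three by blast
  obtain c where c: "c \<in> I" "c \<noteq> a" "c \<noteq> b" using three by blast
  have "\<not> E q b" "\<not> E q c"
    using attached_unique[OF q, of a] a b c False unfolding attached_def by blast+
  have x': "x \<in> S" "x \<notin> I" "E x b" "E x c" using x b c unfolding hub_def by auto
  show ?thesis
  proof (rule ccontr)
    assume "\<not> E x q"
    then show False
      using no_P3P1[of b x c q] x' b c q \<open>\<not> E q b\<close> \<open>\<not> E q c\<close> I symp by (auto dest: sympD)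
  qed
qed

end

lemma P3P1_free_split:
  assumes graph: "simple_graph V E" and free: "P3P1_free V E" and S: "S \<subseteq> V"
    and triple: "has_independent_triple E S"
  obtains X Q where "S = X \<union> Q" "X \<inter> Q = {}" "Q \<noteq> {}" "\<And>x q. x \<in> X \<Longrightarrow> q \<in> Q \<Longrightarrow> E x q"
    "P3_free_on E Q"
proof -
  note E = simple_graphD[OF graph]
  have finS: "finite S" using S E(1) finite_subset by blast
  obtain a\<^sub>1 a\<^sub>2 a\<^sub>3 where a: "a\<^sub>1 \<in> S" "a\<^sub>2 \<in> S" "a\<^sub>3 \<in> S" "a\<^sub>1 \<noteq> a\<^sub>2" "a\<^sub>1 \<noteq> a\<^sub>3" "a\<^sub>2 \<noteq> a\<^sub>3"
    "\<not> E a\<^sub>1 a\<^sub>2" "\<not> E a\<^sub>1 a\<^sub>3" "\<not> E a\<^sub>2 a\<^sub>3"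
    using triple unfolding has_independent_triple_def by blast
  define indep where "indep J \<longleftrightarrow> {a\<^sub>1, a\<^sub>2, a\<^sub>3} \<subseteq> J \<and> (\<forall>x\<in>J. \<forall>y\<in>J. \<not> E x y)" for J
  have "indep {a\<^sub>1, a\<^sub>2, a\<^sub>3}" unfolding indep_def using a(7-9) E(3) sympD[OF E(2)] by blast
  then obtain I where I: "indep I" and I_S: "I \<subseteq> S" and max: "\<And>J. indep J \<Longrightarrow> J \<subseteq> S \<Longrightarrow> card J \<le> card I"
    using obtain_max_card_subset[OF finS] a(1-3) by (metis empty_subsetI insert_subset)
  have aI: "a\<^sub>1 \<in> I" "a\<^sub>2 \<in> I" "a\<^sub>3 \<in> I" and indepI: "\<And>x y. x \<in> I \<Longrightarrow> y \<in> I \<Longrightarrow> \<not> E x y"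
    using I unfolding indep_def by auto
  interpret P3P1_free_max_independent V E S I
  proof
    fix z assume z: "z \<in> S" "z \<notin> I"
    show "\<exists>a\<in>I. E z a"
    proof (rule ccontr)
      assume "\<not> ?thesis"
      then have "\<not> E z a \<and> \<not> E a z" if "a \<in> I" for a using that sympD[OF E(2)] by blast
      then have "indep (insert z I)" using I E(3) unfolding indep_def by auto
      then have "card (insert z I) \<le> card I" using max I_S z(1) by blast
      then show False using finite_subset[OF I_S finS] z(2) by simp
    qed
  next
    fix a b show "\<exists>c\<in>I. c \<noteq> a \<and> c \<noteq> b" using aI a(4-6) by metis
  qed (use graph free S I_S indepI in auto)
  have "I \<subseteq> S - hub" "I \<noteq> {}" using I_S aI unfolding hub_def by auto
  then show ?thesis
    using that[of hub "S - hub"] hub_complete P3_free_on_rest unfolding hub_def by blast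
qed

section \<open>Reconfiguration of \<open>(P\<^sub>3 + P\<^sub>1)\<close>-free graphs\<close>

theorem reaches_and_aligns_optimal:
  assumes graph: "simple_graph V E" and free: "P3P1_free V E"
  shows "S \<subseteq> V \<Longrightarrow> reaches_optimal E S \<and> aligns_optimal E S"
proof (induction "card S" arbitrary: S rule: less_induct)
  case less
  note E = simple_graphD[OF graph]
  have finS: "finite S" using less.prems E(1) finite_subset by blast
  show ?case
  proof (cases "has_independent_triple E S")
    case False
    interpret no_independent_triple E S using finS False E(2) by unfold_locales
    show ?thesis using reaches_optimal aligns_optimal by blast
  next
    case True
    obtain X Q where XQ: "S = X \<union> Q" "X \<inter> Q = {}" "Q \<noteq> {}" "\<And>x q. x \<in> X \<Longrightarrow> q \<in> Q \<Longrightarrow> E x q"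
      "P3_free_on E Q"
      using P3P1_free_split[OF graph free less.prems True] by blast
    have "card X < card S" using XQ(1-3) finS by (auto intro: psubset_card_mono)
    then have X: "reaches_optimal E X" "aligns_optimal E X" using less.hyps less.prems XQ(1) by auto
    have finQ: "finite Q" using finS XQ(1) by simp
    interpret complete_join E S X Q using finS XQ E(2) by unfold_locales auto
    show ?thesis
      using reaches_optimal_join[OF X(1) P3_free_reaches_optimal[OF finQ XQ(5) E(2)]]
        aligns_optimal_join[OF X(2) P3_free_aligns_optimal[OF finQ XQ(5) E(2)]] by blast
  qed
qed

lemma colouring_proper_on: "colouring V E l \<alpha> \<Longrightarrow> proper_on E V {1..l} \<alpha>"
  unfolding colouring_def proper_on_def by blast

lemma proper_on_colouring:
  "simple_graph V E \<Longrightarrow> proper_on E V {1..l} \<phi> \<Longrightarrow> colouring V E l (restrict \<phi> V)"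
  unfolding colouring_def proper_on_def simple_graph_def by auto

lemma recol_walk_refl: "colouring V E k \<alpha> \<Longrightarrow> recol_walk V E k 0 \<alpha> \<alpha>"
  unfolding recol_walk_def by (intro exI[of _ "\<lambda>_. \<alpha>"]) simp

lemma recol_walk_Cons:
  assumes "recol_adj V E k \<alpha> \<beta>" "recol_walk V E k m \<beta> \<gamma>"
  shows "recol_walk V E k (Suc m) \<alpha> \<gamma>"
proof -
  obtain p where p: "p 0 = \<beta>" "p m = \<gamma>" "\<forall>i\<in>{0..m}. colouring V E k (p i)"
    "\<forall>i<m. recol_adj V E k (p i) (p (Suc i))"
    using assms(2) unfolding recol_walk_def by blast
  define q where "q i = (if i = 0 then \<alpha> else p (i - 1))" for i
  have "colouring V E k \<alpha>" using assms(1) unfolding recol_adj_def by blast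
  then show ?thesis
    unfolding recol_walk_def using p assms(1)
    by (intro exI[of _ q]) (auto simp: q_def less_Suc_eq_0_disj)
qed

lemma reach_recol_walk:
  assumes graph: "simple_graph V E"
  shows "recolour_reach E V {1..l} k \<phi> \<psi> \<Longrightarrow> proper_on E V {1..l} \<phi> \<Longrightarrow>
    \<exists>m\<le>k. recol_walk V E l m (restrict \<phi> V) (restrict \<psi> V)"
proof (induction rule: recolour_reach.induct)
  case (reach_agree \<phi> \<psi> k)
  have "restrict \<phi> V = restrict \<psi> V" using reach_agree.hyps by (auto simp: restrict_def)
  moreover have "recol_walk V E l 0 (restrict \<phi> V) (restrict \<phi> V)"
    using recol_walk_refl proper_on_colouring[OF graph reach_agree.prems] .
  ultimately show ?case by (metis le0)
next
  case (reach_step \<phi> \<chi> k \<psi>)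
  have \<chi>: "proper_on E V {1..l} \<chi>"
    using proper_on_step[OF simple_graphD(2)[OF graph] reach_step.hyps(1) reach_step.prems] .
  obtain v c where "v \<in> V" "c \<noteq> \<phi> v" "\<forall>x\<in>V. \<chi> x = (if x = v then c else \<phi> x)"
    using reach_step.hyps(1) unfolding recolour_step_def by blast
  then have "{x\<in>V. restrict \<phi> V x \<noteq> restrict \<chi> V x} = {v}" by auto
  then have "recol_adj V E l (restrict \<phi> V) (restrict \<chi> V)"
    using proper_on_colouring[OF graph] reach_step.prems \<chi> unfolding recol_adj_def by simp
  moreover obtain m where "m \<le> k" "recol_walk V E l m (restrict \<chi> V) (restrict \<psi> V)"
    using reach_step.IH[OF \<chi>] by blast
  ultimately show ?case using recol_walk_Cons Suc_le_mono by blast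
qed

lemma exists_chromatic_colouring:
  assumes "simple_graph V E"
  shows "\<exists>\<gamma>. colouring V E (chromatic_number V E) \<gamma>"
proof -
  obtain f :: "'a \<Rightarrow> nat" where "bij_betw f V {0..<card V}"
    using ex_bij_betw_finite_nat[OF simple_graphD(1)[OF assms]] by blast
  then have f: "inj_on f V" "f ` V = {0..<card V}" unfolding bij_betw_def by auto
  have "colouring V E (card V) (restrict (\<lambda>x. f x + 1) V)"
    unfolding colouring_def
  proof (intro conjI ballI allI impI)
    fix v assume "v \<in> V"
    then have "f v < card V" using f(2) by auto
    with \<open>v \<in> V\<close> show "restrict (\<lambda>x. f x + 1) V v \<in> {1..card V}" by simp
  next
    fix u v assume "E u v"
    then have "u \<in> V" "v \<in> V" "u \<noteq> v" using simple_graphD(3,4)[OF assms] by metis+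
    then show "restrict (\<lambda>x. f x + 1) V u \<noteq> restrict (\<lambda>x. f x + 1) V v"
      using inj_on_eq_iff[OF f(1)] by simp
  qed simp
  then have "\<exists>k \<gamma>. colouring V E k \<gamma>" by blast
  then show ?thesis unfolding chromatic_number_def by (rule LeastI_ex)
qed

lemma optimal_on_card_le_chromatic_number:
  assumes "simple_graph V E" "optimal_on E V \<phi>"
  shows "card (\<phi> ` V) \<le> chromatic_number V E"
proof -
  obtain \<gamma> where \<gamma>: "colouring V E (chromatic_number V E) \<gamma>"
    using exists_chromatic_colouring[OF assms(1)] by blast
  then have "card (\<phi> ` V) \<le> card (\<gamma> ` V)"
    using assms(2) proper_on_mono[OF colouring_proper_on[OF \<gamma>] order_refl subset_UNIV]
    unfolding optimal_on_def by blast
  also have "\<dots> \<le> card {1..chromatic_number V E}"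
    using \<gamma> unfolding colouring_def by (intro card_mono) auto
  finally show ?thesis by simp
qed

lemma unused_colour_card_less:
  assumes "finite S" "card (\<phi> ` S) < card W"
  shows "\<exists>r\<in>W. r \<notin> \<phi> ` S"
proof (rule ccontr)
  assume "\<not> ?thesis"
  then have "card W \<le> card (\<phi> ` S)" using assms(1) by (intro card_mono) auto
  then show False using assms(2) by simp
qed

lemma reach_any_colouring:
  assumes graph: "simple_graph V E" and free: "P3P1_free V E" and l: "chromatic_number V E < l"
    and \<alpha>: "proper_on E V {1..l} \<alpha>" and \<beta>: "proper_on E V {1..l} \<beta>"
  shows "recolour_reach E V {1..l} (6 * card V) \<alpha> \<beta>"
proof -
  note E = simple_graphD[OF graph]
  have unused: "\<exists>r\<in>{1..l}. r \<notin> \<phi> ` V" if "card (\<phi> ` V) \<le> chromatic_number V E" for \<phi>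
    using unused_colour_card_less[OF E(1), of \<phi> "{1..l}"] that l by simp
  obtain reach: "reaches_optimal E V" and align: "aligns_optimal E V"
    using reaches_and_aligns_optimal[OF graph free order_refl] by blast
  obtain \<alpha>\<^sub>1 \<beta>\<^sub>1 where \<alpha>\<^sub>1: "recolour_reach E V {1..l} (card V) \<alpha> \<alpha>\<^sub>1" "optimal_on E V \<alpha>\<^sub>1"
    and \<beta>\<^sub>1: "recolour_reach E V {1..l} (card V) \<beta> \<beta>\<^sub>1" "optimal_on E V \<beta>\<^sub>1"
    using reach \<alpha> \<beta> unfolding reaches_optimal_def by metis
  have "\<alpha>\<^sub>1 ` V \<subseteq> {1..l}" using proper_on_reach[OF \<alpha>\<^sub>1(1) E(2) \<alpha>] unfolding proper_on_def by blast
  then obtain \<alpha>\<^sub>2 where \<alpha>\<^sub>2: "recolour_reach E V {1..l} (2 * card V) \<alpha>\<^sub>1 \<alpha>\<^sub>2" "same_classes V \<alpha>\<^sub>2 \<beta>\<^sub>1"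
    using align \<alpha>\<^sub>1(2) \<beta>\<^sub>1(2) unused[OF optimal_on_card_le_chromatic_number[OF graph \<alpha>\<^sub>1(2)]]
    unfolding aligns_optimal_def by blast
  have "\<exists>r\<in>{1..l}. r \<notin> \<alpha>\<^sub>2 ` V"
    using unused optimal_on_card_le_chromatic_number[OF graph \<beta>\<^sub>1(2)]
      same_classes_card_image[OF \<alpha>\<^sub>2(2)] by simp
  then have "recolour_reach E V {1..l} (2 * card V) \<alpha>\<^sub>2 \<beta>\<^sub>1"
    using same_classes_reach[OF E(1) _ _ \<alpha>\<^sub>2(2)] proper_on_reach[OF \<alpha>\<^sub>2(1) E(2) proper_on_reach[OF \<alpha>\<^sub>1(1) E(2) \<alpha>]]
      proper_on_reach[OF \<beta>\<^sub>1(1) E(2) \<beta>] by blast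
  with \<alpha>\<^sub>1(1) \<alpha>\<^sub>2(1) reach_reverse[OF \<beta>\<^sub>1(1) E(2) \<beta>]
  have "recolour_reach E V {1..l} (card V + 2 * card V + 2 * card V + card V) \<alpha> \<beta>"
    by (blast intro: reach_trans)
  then show ?thesis by (simp add: algebra_simps)
qed

theorem theorem6:
  fixes V :: "'a set" and E :: "'a \<Rightarrow> 'a \<Rightarrow> bool" and n l :: nat
  assumes "simple_graph V E"
    and "P3P1_free V E"
    and "card V = n"
    and "l \<ge> chromatic_number V E + 1"
  shows "\<forall>\<alpha> \<beta>. colouring V E l \<alpha> \<and> colouring V E l \<beta> \<longrightarrow> recol_dist_le V E l \<alpha> \<beta> (6 * n)"
proof (intro allI impI)
  fix \<alpha> \<beta> assume colourings: "colouring V E l \<alpha> \<and> colouring V E l \<beta>"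
  then have "restrict \<alpha> V = \<alpha>" "restrict \<beta> V = \<beta>"
    unfolding colouring_def restrict_def by (auto simp: fun_eq_iff)
  moreover have "proper_on E V {1..l} \<alpha>" "proper_on E V {1..l} \<beta>"
    using colourings colouring_proper_on by blast+
  moreover from this have "recolour_reach E V {1..l} (6 * n) \<alpha> \<beta>"
    using reach_any_colouring[OF assms(1,2)] assms(3,4) by simp
  ultimately show "recol_dist_le V E l \<alpha> \<beta> (6 * n)"
    using reach_recol_walk[OF assms(1)] unfolding recol_dist_le_def by metis
qed

end
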